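(* Let $\mu\in\mathcal P_2(\mathbb R^d)$, $\psi\in T_\mu(\mathcal P_2(\mathbb R^d))$ and $\eta\in\mathcal P(C([0,1],\mathbb R^d))$ with $(e_0)_\#\eta=\mu$. Assume that at least one of the following holds: (1) $\psi$ is of the form $x\mapsto\delta_{v(x)}$ for some measurable $v\in L^2_\mu(\mathbb R^d,\mathbb R^d)$; (2) there exists $f\in L^\infty_t(W^{1,\infty}(\mathbb R^d,\mathbb R^d))$ (i.e. $f:[0,1]\times\mathbb R^d\to\mathbb R^d$ bounded and Lipschitz in $x$, uniformly in $t$) such that $\eta$ is concentrated on curves $\theta$ solving $\theta'(t)=f(t,\theta(t))$. Then there exists a unique parallel transport of $\psi$ along $\eta$.
   Context: $\mathcal P(O)$ denotes Borel probability measures on $O$; $\mathcal P_2(\mathbb R^d)$ those on $\mathbb R^d$ with finite second moment; $f_\#m$ is the image measure. $T_\mu(\mathcal P_2(\mathbb R^d))$ is the set of measurable maps $\psi:\mathbb R^d\to\mathcal P(\mathbb R^d)$, $x\mapsto\psi_x$, with $\int\int|z|^2\psi_x(dz)\mu(dx)<\infty$. For $t\in[0,1]$, $e_t$ is the evaluation map $w\mapsto w(t)$ on spaces of continuous curves. $\pi_1,\pi_2$ are the projections of $\mathbb R^d\times\mathbb R^d$. Let $p_1:C([0,1],\mathbb R^{2d})\to C([0,1],\mathbb R^d)$, $p_1(w)(t)=\pi_1(w(t))$; let $C^1_y([0,1],\mathbb R^{2d})$ be the set of continuous curves $w$ with $t\mapsto\pi_2(w(t))$ of class $C^1$, and on it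 $\partial_2(w)(t)=\frac{d}{dt}\pi_2(w(t))$. A parallel transport of $\psi\in T_\mu(\mathcal P_2(\mathbb R^d))$ along $\eta$ (with $(e_0)_\#\eta=\mu$) is a probability measure $\Psi$ on $C([0,1],\mathbb R^{2d})$ concentrated on $C^1_y([0,1],\mathbb R^{2d})$ such that $(p_1)_\#\Psi=\eta$, $(\partial_2)_\#\Psi=\delta_0$ (Dirac mass at the zero curve), and $(e_0)_\#\Psi(dx,dz)=\mu(dx)\psi_x(dz)$. *)

theory Defs
  imports "HOL-Probability.Probability"
begin

text \<open>Continuous curves on [0,1], represented as functions on the reals that are
  continuous on [0,1] and extended constantly outside [0,1] (so each element of
  C([0,1],X) has exactly one representative).\<close>

definition clamp01 :: "real \<Rightarrow> real" where
  "clamp01 t = max 0 (min 1 t)"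

definition Cpaths :: "(real \<Rightarrow> 'b::metric_space) set" where
  "Cpaths = {w. continuous_on {0..1} w \<and> (\<forall>t. w t = w (clamp01 t))}"

definition sup_dist :: "(real \<Rightarrow> 'b::metric_space) \<Rightarrow> (real \<Rightarrow> 'b) \<Rightarrow> real" where
  "sup_dist w w' = (SUP t\<in>{0..1}. dist (w t) (w' t))"

definition Copen :: "(real \<Rightarrow> 'b::metric_space) set set" where
  "Copen = {U. U \<subseteq> Cpaths \<and>
     (\<forall>w\<in>U. \<exists>e>0. \<forall>w'\<in>Cpaths. sup_dist w w' < e \<longrightarrow> w' \<in> U)}"

definition Cborel :: "(real \<Rightarrow> 'b::metric_space) measure" where
  "Cborel = sigma Cpaths Copen"

definition ev :: "real \<Rightarrow> (real \<Rightarrow> 'b) \<Rightarrow> 'b" where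
  "ev t w = w t"

definition is_prob :: "'a::topological_space measure \<Rightarrow> bool" where
  "is_prob M \<longleftrightarrow> prob_space M \<and> sets M = sets borel"

definition P2 :: "'a::euclidean_space measure \<Rightarrow> bool" where
  "P2 M \<longleftrightarrow> is_prob M \<and> (\<integral>\<^sup>+ x. ennreal ((norm x)\<^sup>2) \<partial>M) < \<infinity>"

definition is_path_prob :: "(real \<Rightarrow> 'b::metric_space) measure \<Rightarrow> bool" where
  "is_path_prob M \<longleftrightarrow> prob_space M \<and> sets M = sets Cborel \<and> space M = Cpaths"

definition Tmu :: "'a::euclidean_space measure \<Rightarrow> ('a \<Rightarrow> 'a measure) set" where
  "Tmu \<mu> = {\<psi>. \<psi> \<in> measurable borel (prob_algebra borel) \<and>
      (\<integral>\<^sup>+ x. (\<integral>\<^sup>+ z. ennreal ((norm z)\<^sup>2) \<partial>(\<psi> x)) \<partial>\<mu>) < \<infinity>}"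

definition joint :: "'a::euclidean_space measure \<Rightarrow> ('a \<Rightarrow> 'a measure) \<Rightarrow> ('a \<times> 'a) measure" where
  "joint \<mu> \<psi> = bind \<mu> (\<lambda>x. distr (\<psi> x) borel (\<lambda>z. (x, z)))"

definition p1 :: "(real \<Rightarrow> 'a \<times> 'a) \<Rightarrow> (real \<Rightarrow> 'a)" where
  "p1 w = (\<lambda>t. fst (w t))"

definition C1y :: "(real \<Rightarrow> 'a::euclidean_space \<times> 'a) set" where
  "C1y = {w \<in> Cpaths. \<exists>g. continuous_on {0..1} g \<and>
      (\<forall>t\<in>{0..1}. ((\<lambda>s. snd (w s)) has_vector_derivative g t) (at t within {0..1}))}"

text \<open>partial_2 on C^1_y (derivative of the second component, as an element of
  C([0,1],R^d)); outside C^1_y (a null set for the measures considered) it is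
  given an irrelevant value.\<close>
definition d2 :: "(real \<Rightarrow> 'a::euclidean_space \<times> 'a) \<Rightarrow> (real \<Rightarrow> 'a)" where
  "d2 w = (if w \<in> C1y
     then (\<lambda>t. vector_derivative (\<lambda>s. snd (w s)) (at (clamp01 t) within {0..1}))
     else (\<lambda>t. 0))"

definition parallel_transport ::
  "'a::euclidean_space measure \<Rightarrow> ('a \<Rightarrow> 'a measure) \<Rightarrow> (real \<Rightarrow> 'a) measure
     \<Rightarrow> (real \<Rightarrow> 'a \<times> 'a) measure \<Rightarrow> bool" where
  "parallel_transport \<mu> \<psi> \<eta> \<Psi> \<longleftrightarrow>
     is_path_prob \<Psi> \<and>
     (AE w in \<Psi>. w \<in> C1y) \<and>
     distr \<Psi> Cborel p1 = \<eta> \<and>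
     distr \<Psi> Cborel d2 = return Cborel (\<lambda>t. 0) \<and>
     distr \<Psi> borel (ev 0) = joint \<mu> \<psi>"

end

(* A parallel transport Psi is concentrated on curves (theta, z) whose second component has
   zero derivative, i.e. is constant in time. Mixing over eta the laws of t |-> (theta t, z) with
   z ~ psi_(theta 0) therefore gives one. For uniqueness it suffices to express the whole curve
   measurably through data whose law is prescribed. In case (1), z = v(theta 0), so Psi is the
   image of eta. In case (2), Gronwall's inequality makes eta-almost every curve a Lipschitz
   function of its initial point; extended to a closure, this flow is Borel, so each lifted curve
   is a Borel function of its initial value (theta 0, z), whose law mu(dx) psi_x(dz) is
   prescribed, and Psi is determined by its finite-dimensional distributions.
   Behind this lie two measurability facts: the Borel sets of C([0,1]) are generated by cylinders
   (by separability), and C^1_y and partial_2 are measurable, since being C^1 on [0,1] is a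
   countable combination of uniform Cauchy conditions on difference quotients. *)

theory Submission
  imports Defs
begin

lemma clamp01_in: "clamp01 t \<in> {0..1}"
  by (auto simp: clamp01_def)

lemma clamp01_bounds [simp]: "0 \<le> clamp01 t" "clamp01 t \<le> 1"
  by (auto simp: clamp01_def)

lemma clamp01_id: "t \<in> {0..1} \<Longrightarrow> clamp01 t = t"
  by (auto simp: clamp01_def)

lemma continuous_on_clamp01: "continuous_on A clamp01"
  unfolding clamp01_def by (intro continuous_intros)

lemma Cpaths_clamp01: "w \<in> Cpaths \<Longrightarrow> w (clamp01 t) = w t"
  by (auto simp: Cpaths_def)

lemma Cpaths_continuous_on: "w \<in> Cpaths \<Longrightarrow> continuous_on {0..1} w"
  by (auto simp: Cpaths_def)

lemma const_in_Cpaths [simp]: "(\<lambda>t. c) \<in> Cpaths"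
  by (simp add: Cpaths_def)

lemma Cpaths_continuous_on_UNIV:
  assumes "w \<in> Cpaths"
  shows "continuous_on UNIV w"
proof -
  have "continuous_on UNIV (\<lambda>t. w (clamp01 t))"
    by (rule continuous_on_compose2[OF Cpaths_continuous_on[OF assms] continuous_on_clamp01])
      (auto simp: clamp01_in)
  then show ?thesis
    using Cpaths_clamp01[OF assms] by simp
qed

lemma Cpaths_borel_measurable: "w \<in> Cpaths \<Longrightarrow> w \<in> borel_measurable borel"
  by (intro borel_measurable_continuous_onI Cpaths_continuous_on_UNIV)

lemma dist_le_sup_dist:
  assumes "w \<in> Cpaths" "w' \<in> Cpaths"
  shows "dist (w t) (w' t) \<le> sup_dist w w'"
proof -
  have "compact ((\<lambda>t. dist (w t) (w' t)) ` {0..1})"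
    using assms by (intro compact_continuous_image continuous_intros) (auto simp: Cpaths_def)
  then have "bdd_above ((\<lambda>t. dist (w t) (w' t)) ` {0..1})"
    by (intro bounded_imp_bdd_above compact_imp_bounded)
  then have "dist (w (clamp01 t)) (w' (clamp01 t)) \<le> sup_dist w w'"
    unfolding sup_dist_def by (intro cSUP_upper) (auto simp: clamp01_in)
  then show ?thesis
    using assms by (simp add: Cpaths_clamp01)
qed

lemma sup_dist_leI:
  assumes "\<And>t. t \<in> {0..1} \<Longrightarrow> dist (w t) (w' t) \<le> r"
  shows "sup_dist w w' \<le> r"
  unfolding sup_dist_def using assms by (intro cSUP_least) auto

section \<open>The Borel sets of C([0,1])\<close>

lemma space_Cborel: "space Cborel = Cpaths"
  unfolding Cborel_def by (rule space_measure_of) (auto simp: Copen_def)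

lemma sets_Cborel: "sets Cborel = sigma_sets Cpaths Copen"
  unfolding Cborel_def by (rule sets_measure_of) (auto simp: Copen_def)

lemma sets_Cborel_openI:
  assumes "U \<subseteq> Cpaths"
    and "\<And>w. w \<in> U \<Longrightarrow> \<exists>e>0. \<forall>w'\<in>Cpaths. sup_dist w w' < e \<longrightarrow> w' \<in> U"
  shows "U \<in> sets Cborel"
  using assms unfolding sets_Cborel by (intro sigma_sets.Basic) (auto simp: Copen_def)

lemma sets_Cborel_closedI:
  assumes "U \<subseteq> Cpaths"
    and "\<And>w. w \<in> Cpaths \<Longrightarrow> w \<notin> U \<Longrightarrow> \<exists>e>0. \<forall>w'\<in>Cpaths. sup_dist w w' < e \<longrightarrow> w' \<notin> U"
  shows "U \<in> sets Cborel"
proof -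
  have "Cpaths - U \<in> sets Cborel"
    using assms by (intro sets_Cborel_openI) auto
  then have "space Cborel - (Cpaths - U) \<in> sets Cborel"
    by auto
  then show ?thesis
    using assms(1) by (simp add: space_Cborel Diff_Diff_Int Int_absorb1)
qed

lemma measurable_ev_Cborel: "ev t \<in> borel_measurable Cborel"
proof (rule borel_measurableI)
  fix S :: "'b::metric_space set"
  assume "open S"
  show "ev t -` S \<inter> space Cborel \<in> sets Cborel"
  proof (rule sets_Cborel_openI)
    fix w assume w: "w \<in> ev t -` S \<inter> space Cborel"
    then obtain e where e: "e > 0" "ball (w t) e \<subseteq> S"
      using \<open>open S\<close> by (auto simp: ev_def open_contains_ball)
    have "w' \<in> ev t -` S \<inter> space Cborel" if "w' \<in> Cpaths" "sup_dist w w' < e" for w'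
      using dist_le_sup_dist[of w w' t] w that e by (force simp: ev_def space_Cborel)
    then show "\<exists>e>0. \<forall>w'\<in>Cpaths. sup_dist w w' < e \<longrightarrow> w' \<in> ev t -` S \<inter> space Cborel"
      using e(1) by blast
  qed (auto simp: space_Cborel)
qed

lemma measurable_apply_Cborel: "(\<lambda>w. w t) \<in> borel_measurable Cborel"
  using measurable_ev_Cborel[of t] by (simp add: ev_def[abs_def])

lemma singleton_in_sets_Cborel:
  assumes "w\<^sub>0 \<in> Cpaths"
  shows "{w\<^sub>0} \<in> sets Cborel"
proof (rule sets_Cborel_closedI)
  fix w assume w: "w \<in> Cpaths" "w \<notin> {w\<^sub>0}"
  then obtain t where t: "w t \<noteq> w\<^sub>0 t"
    by auto
  have "w' \<noteq> w\<^sub>0" if "w' \<in> Cpaths" "sup_dist w w' < dist (w t) (w\<^sub>0 t)" for w'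
    using dist_le_sup_dist[OF w(1) that(1), of t] that(2) by auto
  then show "\<exists>e>0. \<forall>w'\<in>Cpaths. sup_dist w w' < e \<longrightarrow> w' \<notin> {w\<^sub>0}"
    using t by (intro exI[of _ "dist (w t) (w\<^sub>0 t)"]) auto
qed (use assms in auto)

text \<open>Separability of C([0,1]) is witnessed by piecewise linear interpolants of values in a
  countable dense set; normalising by the sum of the hat functions avoids proving that they form
  a partition of unity.\<close>

definition hat_fun :: "nat \<Rightarrow> nat \<Rightarrow> real \<Rightarrow> real" where
  "hat_fun n k t = max 0 (1 - \<bar>real n * t - real k\<bar>)"

definition pl_interp :: "nat \<Rightarrow> 'b::real_normed_vector list \<Rightarrow> real \<Rightarrow> 'b" where
  "pl_interp n ys t = (1 / (\<Sum>k\<le>n. hat_fun n k t)) *\<^sub>R (\<Sum>k\<le>n. hat_fun n k t *\<^sub>R ys ! k)"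

lemma hat_fun_nonneg: "hat_fun n k t \<ge> 0"
  by (simp add: hat_fun_def)

lemma sum_hat_fun_pos:
  assumes "t \<in> {0..1}"
  shows "(\<Sum>k\<le>n. hat_fun n k t) > 0"
proof -
  define k where "k = nat \<lfloor>real n * t\<rfloor>"
  have nt: "0 \<le> real n * t" "real n * t \<le> real n"
    using assms mult_left_le[of t "real n"] by auto
  then have "k \<le> n"
    by (simp add: k_def nat_le_iff floor_le_iff)
  have "real k = of_int \<lfloor>real n * t\<rfloor>"
    using nt by (simp add: k_def)
  then have "real k \<le> real n * t" "real n * t < real k + 1"
    by linarith+
  then have "0 < hat_fun n k t"
    by (simp add: hat_fun_def)
  moreover have "hat_fun n k t \<le> (\<Sum>k\<le>n. hat_fun n k t)"
    using \<open>k \<le> n\<close> by (intro member_le_sum) (auto simp: hat_fun_nonneg)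
  ultimately show ?thesis
    by linarith
qed

lemma continuous_on_pl_interp: "continuous_on {0..1} (pl_interp n ys)"
proof -
  have "(\<Sum>k\<le>n. hat_fun n k t) \<noteq> 0" if "t \<in> {0..1}" for t
    using sum_hat_fun_pos[OF that, of n] by simp
  then show ?thesis
    unfolding pl_interp_def hat_fun_def by (intro continuous_intros) (auto simp: hat_fun_def)
qed

lemma pl_interp_approx:
  fixes w :: "real \<Rightarrow> 'b::real_normed_vector"
  assumes "e > 0" "n > 0"
    and modulus: "\<And>x x'. x \<in> {0..1} \<Longrightarrow> x' \<in> {0..1} \<Longrightarrow> \<bar>x' - x\<bar> \<le> 1 / real n \<Longrightarrow>
      dist (w x') (w x) < e / 3"
    and ys: "\<And>k. k \<le> n \<Longrightarrow> dist (ys ! k) (w (real k / real n)) < e / 3"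
    and t: "t \<in> {0..1}"
  shows "dist (pl_interp n ys t) (w t) < e"
proof -
  define S where "S = (\<Sum>k\<le>n. hat_fun n k t)"
  have S: "S > 0"
    using sum_hat_fun_pos[OF t] by (simp add: S_def)
  have near: "hat_fun n k t * norm (ys ! k - w t) \<le> hat_fun n k t * (e/3 + e/3)" if "k \<le> n" for k
  proof (cases "hat_fun n k t = 0")
    case False
    then have "\<bar>real n * t - real k\<bar> < 1"
      by (auto simp: hat_fun_def)
    moreover have "real n * (t - real k / real n) = real n * t - real k"
      using \<open>n > 0\<close> by (simp add: field_simps)
    ultimately have "real n * \<bar>t - real k / real n\<bar> < 1"
      by (simp add: abs_mult)
    then have "\<bar>t - real k / real n\<bar> \<le> 1 / real n"
      using \<open>n > 0\<close> by (simp add: field_simps)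
    moreover have "real k / real n \<in> {0..1}"
      using that \<open>n > 0\<close> by auto
    ultimately have "dist (w t) (w (real k / real n)) < e/3"
      using modulus t by auto
    then have "norm (ys ! k - w t) < e/3 + e/3"
      using ys[OF that] by (metis dist_norm dist_commute dist_triangle_lt add_strict_mono)
    then show ?thesis
      using hat_fun_nonneg[of n k t] by (intro mult_left_mono) auto
  qed simp
  have "pl_interp n ys t - w t = (1 / S) *\<^sub>R (\<Sum>k\<le>n. hat_fun n k t *\<^sub>R (ys ! k - w t))"
    using S by (simp add: pl_interp_def S_def[symmetric] scaleR_diff_right sum_subtractf
        scaleR_sum_left[symmetric] field_simps)
  then have "dist (pl_interp n ys t) (w t) = (1/S) * norm (\<Sum>k\<le>n. hat_fun n k t *\<^sub>R (ys ! k - w t))"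
    using S by (simp add: dist_norm)
  also have "\<dots> \<le> (1/S) * (\<Sum>k\<le>n. hat_fun n k t * norm (ys ! k - w t))"
    using S by (intro mult_left_mono order_trans[OF norm_sum]) (auto simp: hat_fun_nonneg)
  also have "\<dots> \<le> (1/S) * (\<Sum>k\<le>n. hat_fun n k t * (e/3 + e/3))"
    by (intro mult_left_mono sum_mono near) (use S in auto)
  also have "\<dots> = e/3 + e/3"
    using S by (simp add: S_def[symmetric] sum_distrib_right[symmetric] del: times_divide_eq_left)
      (simp add: field_simps)
  finally show ?thesis
    using \<open>e > 0\<close> by linarith
qed

lemma Cpaths_separable:
  obtains D :: "(real \<Rightarrow> 'b::{real_normed_vector, second_countable_topology}) set"
  where "countable D" "\<And>p. p \<in> D \<Longrightarrow> continuous_on {0..1} p"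
    "\<And>w e. w \<in> Cpaths \<Longrightarrow> e > 0 \<Longrightarrow> \<exists>p\<in>D. \<forall>t\<in>{0..1}. dist (p t) (w t) < e"
proof -
  obtain Y :: "'b set" where Y: "countable Y" "\<And>X. open X \<Longrightarrow> X \<noteq> {} \<Longrightarrow> \<exists>y\<in>Y. y \<in> X"
    using countable_dense_setE by blast
  define D where "D = (\<lambda>(n, ys). pl_interp n ys) ` (UNIV \<times> lists Y)"
  have "\<exists>p\<in>D. \<forall>t\<in>{0..1}. dist (p t) (w t) < e" if w: "w \<in> Cpaths" and e: "e > 0" for w e
  proof -
    have "uniformly_continuous_on {0..1} w"
      using w by (intro compact_uniformly_continuous) (auto simp: Cpaths_def)
    then obtain d where d: "d > 0"
      "\<And>x x'. x \<in> {0..1} \<Longrightarrow> x' \<in> {0..1} \<Longrightarrow> dist x' x < d \<Longrightarrow> dist (w x') (w x) < e/3"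
      unfolding uniformly_continuous_on_def using e by (metis divide_pos_pos zero_less_numeral)
    obtain m where m: "inverse (real (Suc m)) < d"
      using reals_Archimedean[OF d(1)] by blast
    define n where "n = Suc m"
    have n: "n > 0" "1 / real n < d"
      using m by (simp_all add: n_def inverse_eq_divide)
    have "\<exists>y. y \<in> Y \<and> dist y (w (real k / real n)) < e/3" for k
      using Y(2)[of "ball (w (real k / real n)) (e/3)"] e by (auto simp: dist_commute)
    then obtain c where c: "\<And>k. c k \<in> Y" "\<And>k. dist (c k) (w (real k / real n)) < e/3"
      by metis
    define ys where "ys = map c [0..<Suc n]"
    have "(n, ys) \<in> UNIV \<times> lists Y"
      using c(1) by (auto simp: ys_def)
    then have "pl_interp n ys \<in> D"
      unfolding D_def by (rule rev_image_eqI) simp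
    moreover have "\<forall>t\<in>{0..1}. dist (pl_interp n ys t) (w t) < e"
      using d n c(2) by (intro ballI pl_interp_approx[OF e n(1)])
        (auto simp: ys_def nth_map_upt dist_real_def simp del: upt_Suc)
    ultimately show ?thesis
      by blast
  qed
  moreover have "countable D"
    unfolding D_def using Y(1) by (intro countable_image countable_SIGMA) auto
  moreover have "continuous_on {0..1} p" if "p \<in> D" for p
    using that continuous_on_pl_interp by (auto simp: D_def)
  ultimately show ?thesis
    using that by blast
qed

definition cyl :: "real set \<Rightarrow> (real \<Rightarrow> 'b set) \<Rightarrow> (real \<Rightarrow> 'b::metric_space) set" where
  "cyl F B = {w \<in> Cpaths. \<forall>t\<in>F. w t \<in> B t}"

definition cylinders :: "(real \<Rightarrow> 'b::metric_space) set set" where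
  "cylinders = {cyl F B | F B. finite F \<and> (\<forall>t\<in>F. B t \<in> sets borel)}"

lemma cylinders_subset_Pow: "cylinders \<subseteq> Pow Cpaths"
  by (auto simp: cylinders_def cyl_def)

lemma cyl_in_sets_Cborel:
  assumes "finite F" "\<And>t. t \<in> F \<Longrightarrow> B t \<in> sets borel"
  shows "cyl F B \<in> sets Cborel"
proof -
  have "cyl F B = {w \<in> space Cborel. \<forall>t\<in>F. w t \<in> B t}"
    by (simp add: cyl_def space_Cborel)
  also have "\<dots> \<in> sets Cborel"
    using assms by (intro sets.sets_Collect_finite_All pred_sets2[OF _ measurable_apply_Cborel, unfolded pred_def])
  finally show ?thesis .
qed

lemma Int_stable_cylinders: "Int_stable (cylinders :: (real \<Rightarrow> 'b::metric_space) set set)"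
proof (rule Int_stableI)
  fix a b :: "(real \<Rightarrow> 'b) set"
  assume "a \<in> cylinders" "b \<in> cylinders"
  then obtain F F' and B B' :: "real \<Rightarrow> 'b set" where ab:
    "a = cyl F B" "finite F" "\<And>t. t \<in> F \<Longrightarrow> B t \<in> sets borel"
    "b = cyl F' B'" "finite F'" "\<And>t. t \<in> F' \<Longrightarrow> B' t \<in> sets borel"
    by (auto simp: cylinders_def)
  define C where "C t = (if t \<in> F then B t else UNIV) \<inter> (if t \<in> F' then B' t else UNIV)" for t
  have "a \<inter> b = cyl (F \<union> F') C"
    by (auto simp: ab cyl_def C_def)
  moreover have "C t \<in> sets borel" for t
    using ab by (auto simp: C_def)
  ultimately show "a \<inter> b \<in> cylinders"
    using ab by (auto simp: cylinders_def)
qed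

lemma closure_Rats_Icc01: "closure (\<rat> \<inter> {0..1::real}) = {0..1}"
  using closure_convex_Int_superset[of "{0..1::real}" \<rat>] by (simp add: Rats_closure_real Int_commute)

definition sup_cball :: "(real \<Rightarrow> 'b::metric_space) \<Rightarrow> real \<Rightarrow> (real \<Rightarrow> 'b) set" where
  "sup_cball p r = {w \<in> Cpaths. \<forall>t\<in>{0..1}. dist (p t) (w t) \<le> r}"

lemma sup_cball_in_sigma_cylinders:
  assumes "continuous_on {0..1} p"
  shows "sup_cball p r \<in> sigma_sets Cpaths cylinders"
proof -
  interpret S: sigma_algebra Cpaths "sigma_sets Cpaths cylinders"
    using cylinders_subset_Pow by (rule sigma_algebra_sigma_sets)
  have rat_dense: "w \<in> sup_cball p r"
    if w: "w \<in> Cpaths" "\<forall>q\<in>\<rat> \<inter> {0..1}. dist (p q) (w q) \<le> r" for w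
  proof -
    have cont: "continuous_on (closure (\<rat> \<inter> {0..1})) (\<lambda>t. dist (p t) (w t))"
      unfolding closure_Rats_Icc01
      using assms Cpaths_continuous_on[OF w(1)] by (intro continuous_intros)
    then have "dist (p t) (w t) \<le> r" if "t \<in> {0..1}" for t
      using continuous_le_on_closure[OF cont, of t r] w(2) that
      by (simp add: closure_Rats_Icc01)
    then show ?thesis
      using w(1) by (simp add: sup_cball_def)
  qed
  have "sup_cball p r = (\<Inter>q\<in>\<rat> \<inter> {0..1}. cyl {q} (\<lambda>_. cball (p q) r))"
  proof (intro equalityI subsetI)
    fix w assume "w \<in> sup_cball p r"
    then show "w \<in> (\<Inter>q\<in>\<rat> \<inter> {0..1}. cyl {q} (\<lambda>_. cball (p q) r))"
      by (auto simp: sup_cball_def cyl_def)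
  next
    fix w assume w: "w \<in> (\<Inter>q\<in>\<rat> \<inter> {0..1}. cyl {q} (\<lambda>_. cball (p q) r))"
    then have "w \<in> cyl {0} (\<lambda>_. cball (p 0) r)"
      by simp
    then have "w \<in> Cpaths"
      by (simp add: cyl_def)
    moreover have "\<forall>q\<in>\<rat> \<inter> {0..1}. dist (p q) (w q) \<le> r"
      using w by (auto simp: cyl_def)
    ultimately show "w \<in> sup_cball p r"
      by (rule rat_dense)
  qed
  also have "\<dots> \<in> sigma_sets Cpaths cylinders"
  proof (rule S.countable_INT')
    have "cyl {q} (\<lambda>_. cball (p q) r) \<in> cylinders" for q
      unfolding cylinders_def by (intro CollectI exI[of _ "{q}"] exI[of _ "\<lambda>_. cball (p q) r"]) auto
    then show "(\<lambda>q. cyl {q} (\<lambda>_. cball (p q) r)) ` (\<rat> \<inter> {0..1}) \<subseteq> sigma_sets Cpaths cylinders"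
      by (auto intro: sigma_sets.Basic)
  qed (auto simp: countable_rat intro: exI[of _ 0])
  finally show ?thesis .
qed

lemma Copen_eq_Union_sup_cball:
  fixes U :: "(real \<Rightarrow> 'b::metric_space) set"
  assumes U: "U \<in> Copen"
    and D: "\<And>w e. w \<in> Cpaths \<Longrightarrow> e > 0 \<Longrightarrow> \<exists>p\<in>D. \<forall>t\<in>{0..1}. dist (p t) (w t) < e"
  shows "U = (\<Union>(p, r) \<in> {(p, r). p \<in> D \<and> r \<in> \<rat> \<and> r > 0 \<and> sup_cball p r \<subseteq> U}. sup_cball p r)"
proof (intro equalityI subsetI)
  fix w assume w: "w \<in> U"
  then have "w \<in> Cpaths"
    using U by (auto simp: Copen_def)
  obtain e where e: "e > 0" "\<And>w'. w' \<in> Cpaths \<Longrightarrow> sup_dist w w' < e \<Longrightarrow> w' \<in> U"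
    using U w by (auto simp: Copen_def)
  obtain r where r: "r \<in> \<rat>" "0 < r" "r < e / 2"
    using Rats_dense_in_real[of 0 "e/2"] e by auto
  obtain p where p: "p \<in> D" "\<And>t. t \<in> {0..1} \<Longrightarrow> dist (p t) (w t) < r"
    using D[OF \<open>w \<in> Cpaths\<close> r(2)] by auto
  have "sup_cball p r \<subseteq> U"
  proof
    fix w' assume w': "w' \<in> sup_cball p r"
    have "dist (w t) (w' t) \<le> r + r" if "t \<in> {0..1}" for t
    proof -
      have "dist (p t) (w' t) \<le> r"
        using w' that by (simp add: sup_cball_def)
      then show ?thesis
        using dist_triangle3[of "w t" "w' t" "p t"] p(2)[OF that] by linarith
    qed
    then have "sup_dist w w' \<le> r + r"
      by (rule sup_dist_leI)
    then show "w' \<in> U"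
      using e(2)[of w'] w' r by (auto simp: sup_cball_def)
  qed
  moreover have "w \<in> sup_cball p r"
    using p \<open>w \<in> Cpaths\<close> by (auto simp: sup_cball_def less_imp_le)
  ultimately show "w \<in> (\<Union>(p, r) \<in> {(p, r). p \<in> D \<and> r \<in> \<rat> \<and> r > 0 \<and> sup_cball p r \<subseteq> U}. sup_cball p r)"
    using p r by blast
qed auto

lemma sets_Cborel_eq_sigma_cylinders:
  "sets Cborel = sigma_sets Cpaths (cylinders :: (real \<Rightarrow> 'b::euclidean_space) set set)"
proof
  show "sigma_sets Cpaths cylinders \<subseteq> sets (Cborel :: (real \<Rightarrow> 'b) measure)"
    using sets.sigma_sets_subset[of "cylinders" Cborel] cyl_in_sets_Cborel
    by (auto simp: cylinders_def space_Cborel)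
next
  interpret S: sigma_algebra Cpaths "sigma_sets Cpaths (cylinders :: (real \<Rightarrow> 'b) set set)"
    using cylinders_subset_Pow by (rule sigma_algebra_sigma_sets)
  obtain D :: "(real \<Rightarrow> 'b) set" where D: "countable D" "\<And>p. p \<in> D \<Longrightarrow> continuous_on {0..1} p"
    "\<And>w e. w \<in> Cpaths \<Longrightarrow> e > 0 \<Longrightarrow> \<exists>p\<in>D. \<forall>t\<in>{0..1}. dist (p t) (w t) < e"
    using Cpaths_separable by blast
  have "U \<in> sigma_sets Cpaths cylinders" if "U \<in> Copen" for U :: "(real \<Rightarrow> 'b) set"
  proof -
    define I where "I = {(p, r). p \<in> D \<and> r \<in> \<rat> \<and> r > 0 \<and> sup_cball p r \<subseteq> U}"
    have "countable I"
      by (rule countable_subset[of _ "D \<times> \<rat>"]) (auto simp: I_def D(1) countable_rat)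
    then have "(\<Union>(p, r)\<in>I. sup_cball p r) \<in> sigma_sets Cpaths cylinders"
      by (intro S.countable_UN'') (auto simp: I_def intro!: sup_cball_in_sigma_cylinders D(2))
    then show ?thesis
      using Copen_eq_Union_sup_cball[OF that D(3)] by (simp add: I_def)
  qed
  then show "sets (Cborel :: (real \<Rightarrow> 'b) measure) \<subseteq> sigma_sets Cpaths cylinders"
    unfolding sets_Cborel by (intro S.sigma_sets_subset) auto
qed

lemma measurable_CborelI:
  fixes f :: "'x \<Rightarrow> real \<Rightarrow> 'b::euclidean_space"
  assumes "\<And>x. x \<in> space M \<Longrightarrow> f x \<in> Cpaths"
    and "\<And>t. t \<in> {0..1} \<Longrightarrow> (\<lambda>x. f x t) \<in> borel_measurable M"
  shows "f \<in> M \<rightarrow>\<^sub>M Cborel"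
proof (rule measurable_sigma_sets[OF sets_Cborel_eq_sigma_cylinders cylinders_subset_Pow])
  show "f \<in> space M \<rightarrow> Cpaths"
    using assms(1) by auto
  fix y assume "y \<in> (cylinders :: (real \<Rightarrow> 'b) set set)"
  then obtain F B where y: "y = cyl F B" "finite F" "\<And>t. t \<in> F \<Longrightarrow> B t \<in> sets borel"
    by (auto simp: cylinders_def)
  have "f -` y \<inter> space M = {x \<in> space M. \<forall>t\<in>F. f x (clamp01 t) \<in> B t}"
    using assms(1) by (auto simp: y cyl_def Cpaths_clamp01)
  also have "\<dots> \<in> sets M"
    using y by (intro sets.sets_Collect_finite_All pred_sets2[OF _ assms(2)[OF clamp01_in], unfolded pred_def])
  finally show "f -` y \<inter> space M \<in> sets M" .
qed

lemma measure_eqI_Cborel: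
  fixes M N :: "(real \<Rightarrow> 'b::euclidean_space) measure"
  assumes "sets M = sets Cborel" "sets N = sets Cborel" "finite_measure M"
    and "\<And>F B. finite F \<Longrightarrow> (\<And>t. t \<in> F \<Longrightarrow> B t \<in> sets borel) \<Longrightarrow>
      emeasure M (cyl F B) = emeasure N (cyl F B)"
  shows "M = N"
proof (rule measure_eqI_generator_eq[OF Int_stable_cylinders cylinders_subset_Pow])
  show "sets M = sigma_sets Cpaths cylinders" "sets N = sigma_sets Cpaths cylinders"
    using assms(1,2) sets_Cborel_eq_sigma_cylinders by auto
  show "\<And>X. X \<in> cylinders \<Longrightarrow> emeasure M X = emeasure N X"
    using assms(4) by (auto simp: cylinders_def)
  show "range (\<lambda>i::nat. cyl {} (\<lambda>_. UNIV)) \<subseteq> cylinders"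
    by (auto simp: cylinders_def)
  show "(\<Union>i::nat. cyl {} (\<lambda>_. UNIV)) = Cpaths"
    by (auto simp: cyl_def)
  show "\<And>i::nat. emeasure M (cyl {} (\<lambda>_. UNIV)) \<noteq> \<infinity>"
    using finite_measure.emeasure_finite[OF assms(3)] by simp
qed

section \<open>Uniform differentiability on [0,1]\<close>

definition diff_quot :: "(real \<Rightarrow> 'a::real_normed_vector) \<Rightarrow> real \<Rightarrow> real \<Rightarrow> 'a" where
  "diff_quot h s t = (1 / (t - s)) *\<^sub>R (h t - h s)"

text \<open>A function is \<open>C\<^sup>1\<close> on [0,1] iff the oscillation below tends to 0 with \<open>d\<close>; unlike the
  existence of a continuous derivative, this is a countable combination of conditions that are
  closed for the uniform topology.\<close>

definition diff_quot_osc :: "(real \<Rightarrow> 'a::real_normed_vector) \<Rightarrow> real \<Rightarrow> real \<Rightarrow> bool" where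
  "diff_quot_osc h e d \<longleftrightarrow> (\<forall>s t s' t'. s \<in> {0..1} \<longrightarrow> t \<in> {0..1} \<longrightarrow> s' \<in> {0..1} \<longrightarrow> t' \<in> {0..1} \<longrightarrow>
     s \<noteq> t \<longrightarrow> s' \<noteq> t' \<longrightarrow> \<bar>s - s'\<bar> < d \<longrightarrow> \<bar>t - s\<bar> < d \<longrightarrow> \<bar>t' - s'\<bar> < d \<longrightarrow>
     norm (diff_quot h s t - diff_quot h s' t') \<le> e)"

definition diff_quot_cauchy :: "(real \<Rightarrow> 'a::real_normed_vector) \<Rightarrow> bool" where
  "diff_quot_cauchy h \<longleftrightarrow> (\<forall>e>0. \<exists>d>0. diff_quot_osc h e d)"

lemma diff_quot_osc_mono:
  assumes "diff_quot_osc h e d" "e \<le> e'" "d' \<le> d"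
  shows "diff_quot_osc h e' d'"
  using assms unfolding diff_quot_osc_def by (meson less_le_trans order_trans)

lemma diff_quot_cauchy_iff_nat:
  "diff_quot_cauchy h \<longleftrightarrow>
    (\<forall>m::nat. \<exists>k::nat. diff_quot_osc h (inverse (real (Suc m))) (inverse (real (Suc k))))"
proof
  show "\<forall>m. \<exists>k. diff_quot_osc h (inverse (real (Suc m))) (inverse (real (Suc k)))"
    if h: "diff_quot_cauchy h"
  proof
    fix m :: nat
    have "inverse (real (Suc m)) > 0"
      by simp
    then obtain d where d: "d > 0" "diff_quot_osc h (inverse (real (Suc m))) d"
      using h unfolding diff_quot_cauchy_def by blast
    obtain k where "inverse (real (Suc k)) < d"
      using reals_Archimedean[OF d(1)] by blast
    then have "diff_quot_osc h (inverse (real (Suc m))) (inverse (real (Suc k)))"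
      by (intro diff_quot_osc_mono[OF d(2) order_refl less_imp_le])
    then show "\<exists>k. diff_quot_osc h (inverse (real (Suc m))) (inverse (real (Suc k)))" ..
  qed
  show "diff_quot_cauchy h"
    if osc: "\<forall>m. \<exists>k. diff_quot_osc h (inverse (real (Suc m))) (inverse (real (Suc k)))"
    unfolding diff_quot_cauchy_def
  proof (intro allI impI)
    fix e :: real assume "e > 0"
    then obtain m where m: "inverse (real (Suc m)) < e"
      using reals_Archimedean by blast
    obtain k where "diff_quot_osc h (inverse (real (Suc m))) (inverse (real (Suc k)))"
      using osc by blast
    then have "diff_quot_osc h e (inverse (real (Suc k)))"
      by (rule diff_quot_osc_mono[OF _ less_imp_le[OF m] order_refl])
    moreover have "inverse (real (Suc k)) > 0"
      by simp
    ultimately show "\<exists>d>0. diff_quot_osc h e d"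
      by blast
  qed
qed

lemma norm_diff_quot_minus_le:
  fixes h g :: "real \<Rightarrow> 'a::real_normed_vector"
  assumes deriv: "\<And>u. u \<in> {0..1} \<Longrightarrow> (h has_vector_derivative g u) (at u within {0..1})"
    and st: "s \<in> {0..1}" "t \<in> {0..1}" "s \<noteq> t"
    and bound: "\<And>u. u \<in> closed_segment s t \<Longrightarrow> norm (g u - g s) \<le> B"
  shows "norm (diff_quot h s t - g s) \<le> B"
proof -
  define f where "f u = h u - u *\<^sub>R g s" for u
  have S01: "closed_segment s t \<subseteq> {0..1}"
    using st by (auto simp: closed_segment_eq_real_ivl split: if_splits)
  have "(f has_derivative (\<lambda>x. x *\<^sub>R (g u - g s))) (at u within closed_segment s t)"
    if "u \<in> closed_segment s t" for u
  proof -
    have "(h has_vector_derivative g u) (at u within closed_segment s t)"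
      using has_vector_derivative_within_subset[OF deriv S01] that S01 by auto
    then have "(f has_vector_derivative (g u - g s)) (at u within closed_segment s t)"
      unfolding f_def by (auto intro!: derivative_eq_intros)
    then show ?thesis
      by (simp add: has_vector_derivative_def)
  qed
  then have "norm (f t - f s) \<le> B * norm (t - s)"
    using bound by (intro differentiable_bound[of "closed_segment s t"])
      (auto simp: onorm_scaleR_left[OF bounded_linear_ident] onorm_id[where 'a=real])
  moreover have "f t - f s = (t - s) *\<^sub>R (diff_quot h s t - g s)"
    using st by (simp add: f_def diff_quot_def algebra_simps)
  ultimately show ?thesis
    using st by (simp add: mult.commute)
qed

lemma C1_imp_diff_quot_cauchy:
  fixes h g :: "real \<Rightarrow> 'a::real_normed_vector"
  assumes deriv: "\<And>u. u \<in> {0..1} \<Longrightarrow> (h has_vector_derivative g u) (at u within {0..1})"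
    and "continuous_on {0..1} g"
  shows "diff_quot_cauchy h"
  unfolding diff_quot_cauchy_def
proof (intro allI impI)
  fix e :: real assume "e > 0"
  have "uniformly_continuous_on {0..1} g"
    using assms(2) by (intro compact_uniformly_continuous) auto
  then obtain d where d: "d > 0"
    "\<And>x x'. x \<in> {0..1} \<Longrightarrow> x' \<in> {0..1} \<Longrightarrow> dist x' x < d \<Longrightarrow> dist (g x') (g x) < e/3"
    unfolding uniformly_continuous_on_def using \<open>e > 0\<close> by (metis divide_pos_pos zero_less_numeral)
  have close: "norm (diff_quot h s t - g s) \<le> e/3"
    if "s \<in> {0..1}" "t \<in> {0..1}" "s \<noteq> t" "\<bar>t - s\<bar> < d" for s t
  proof (rule norm_diff_quot_minus_le[OF deriv that(1-3)])
    fix u assume "u \<in> closed_segment s t"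
    then have "u \<in> {0..1}" "\<bar>u - s\<bar> < d"
      using that by (auto simp: closed_segment_eq_real_ivl split: if_splits)
    then show "norm (g u - g s) \<le> e/3"
      using d(2)[of s u] that(1) by (simp add: dist_norm)
  qed
  have "diff_quot_osc h e d"
    unfolding diff_quot_osc_def
  proof (intro allI impI)
    fix s t s' t' :: real
    assume a: "s \<in> {0..1}" "t \<in> {0..1}" "s' \<in> {0..1}" "t' \<in> {0..1}" "s \<noteq> t" "s' \<noteq> t'"
      "\<bar>s - s'\<bar> < d" "\<bar>t - s\<bar> < d" "\<bar>t' - s'\<bar> < d"
    have "norm (g s - g s') \<le> e/3"
      using d(2)[of s' s] a by (simp add: dist_norm dist_real_def)
    moreover have "norm (diff_quot h s t - diff_quot h s' t') \<le>
        norm (diff_quot h s t - g s) + norm (g s - g s') + norm (diff_quot h s' t' - g s')"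
      using norm_triangle_ineq4[of "diff_quot h s t - g s + (g s - g s')" "diff_quot h s' t' - g s'"]
        norm_triangle_ineq[of "diff_quot h s t - g s" "g s - g s'"] by simp
    ultimately show "norm (diff_quot h s t - diff_quot h s' t') \<le> e"
      using close[of s t] close[of s' t'] a by linarith
  qed
  then show "\<exists>d>0. diff_quot_osc h e d"
    using d(1) by blast
qed

text \<open>The derivative is read off along this sequence, so that \<open>\<partial>\<^sub>2\<close> becomes a pointwise limit of
  measurable functionals of the path.\<close>

definition near_point :: "nat \<Rightarrow> real \<Rightarrow> real" where
  "near_point n x = x + (if x \<le> 1/2 then 1 else -1) / (real n + 2)"

lemma near_point:
  assumes "x \<in> {0..1}"
  shows "near_point n x \<in> {0..1}" "near_point n x \<noteq> x" "\<bar>near_point n x - x\<bar> = 1 / (real n + 2)"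
proof -
  define a where "a = 1 / (real n + 2)"
  have "a \<le> 1/2" "a > 0"
    by (auto simp: a_def field_simps)
  moreover have "near_point n x = x + (if x \<le> 1/2 then a else -a)"
    by (simp add: near_point_def a_def)
  ultimately have "near_point n x \<in> {0..1}" "near_point n x \<noteq> x" "\<bar>near_point n x - x\<bar> = a"
    using assms by auto
  then show "near_point n x \<in> {0..1}" "near_point n x \<noteq> x" "\<bar>near_point n x - x\<bar> = 1 / (real n + 2)"
    by (simp_all add: a_def)
qed

lemma eventually_near_point_close:
  assumes "d > 0" "x \<in> {0..1}"
  shows "\<exists>N. \<forall>n\<ge>N. \<bar>near_point n x - x\<bar> < d"
proof -
  obtain N where N: "inverse (real (Suc N)) < d"
    using reals_Archimedean[OF assms(1)] by blast
  have "1 / (real n + 2) < d" if "n \<ge> N" for n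
  proof -
    have "1 / (real n + 2) \<le> inverse (real (Suc N))"
      using that by (simp add: field_simps)
    then show ?thesis
      using N by linarith
  qed
  then show ?thesis
    using near_point(3)[OF assms(2)] by metis
qed

definition diff_quot_lim :: "(real \<Rightarrow> 'a::real_normed_vector) \<Rightarrow> real \<Rightarrow> 'a" where
  "diff_quot_lim h x = lim (\<lambda>n. diff_quot h x (near_point n x))"

context
  fixes h :: "real \<Rightarrow> 'a::banach"
  assumes h: "diff_quot_cauchy h"
begin

lemma diff_quot_near_point_LIMSEQ:
  assumes x: "x \<in> {0..1}"
  shows "(\<lambda>n. diff_quot h x (near_point n x)) \<longlonglongrightarrow> diff_quot_lim h x"
proof -
  have "Cauchy (\<lambda>n. diff_quot h x (near_point n x))"
  proof (rule CauchyI)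
    fix e :: real assume "e > 0"
    then obtain d where d: "d > 0" "diff_quot_osc h (e/2) d"
      using h by (auto simp: diff_quot_cauchy_def dest: spec[of _ "e/2"])
    obtain N where N: "\<forall>n\<ge>N. \<bar>near_point n x - x\<bar> < d"
      using eventually_near_point_close[OF d(1) x] by blast
    have "norm (diff_quot h x (near_point m x) - diff_quot h x (near_point n x)) \<le> e/2"
      if "m \<ge> N" "n \<ge> N" for m n
      using d(2)[unfolded diff_quot_osc_def, rule_format, of x "near_point m x" x "near_point n x"]
        x near_point(1,2)[OF x] N that d(1) by (metis abs_0 diff_self)
    then show "\<exists>M. \<forall>m\<ge>M. \<forall>n\<ge>M. norm (diff_quot h x (near_point m x) - diff_quot h x (near_point n x)) < e"
      using \<open>e > 0\<close> by (intro exI[of _ N]) (auto intro: le_less_trans[of _ "e/2"])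
  qed
  then have "convergent (\<lambda>n. diff_quot h x (near_point n x))"
    by (rule Cauchy_convergent)
  then show ?thesis
    unfolding diff_quot_lim_def by (simp only: convergent_LIMSEQ_iff)
qed

lemma norm_diff_quot_minus_lim_le:
  assumes "diff_quot_osc h e d"
    and st: "s \<in> {0..1}" "t \<in> {0..1}" "s' \<in> {0..1}" "s \<noteq> t" "\<bar>s - s'\<bar> < d" "\<bar>t - s\<bar> < d"
  shows "norm (diff_quot h s t - diff_quot_lim h s') \<le> e"
proof (rule LIMSEQ_le_const2)
  show "(\<lambda>n. norm (diff_quot h s t - diff_quot h s' (near_point n s'))) \<longlonglongrightarrow>
      norm (diff_quot h s t - diff_quot_lim h s')"
    by (intro tendsto_intros diff_quot_near_point_LIMSEQ st(3))
  obtain N where N: "\<forall>n\<ge>N. \<bar>near_point n s' - s'\<bar> < d"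
    using eventually_near_point_close[of d s'] st by force
  have "norm (diff_quot h s t - diff_quot h s' (near_point n s')) \<le> e" if "n \<ge> N" for n
    using assms(1)[unfolded diff_quot_osc_def, rule_format, of s t s' "near_point n s'"]
      st near_point(1,2)[OF st(3), of n] N that by auto
  then show "\<exists>N. \<forall>n\<ge>N. norm (diff_quot h s t - diff_quot h s' (near_point n s')) \<le> e"
    by blast
qed

lemma diff_quot_cauchy_has_vector_derivative:
  assumes x: "x \<in> {0..1}"
  shows "(h has_vector_derivative diff_quot_lim h x) (at x within {0..1})"
  unfolding has_vector_derivative_def has_derivative_within
proof (intro conjI bounded_linear_scaleR_left)
  let ?g = "diff_quot_lim h x"
  let ?R = "\<lambda>y. (1 / norm (y - x)) *\<^sub>R (h y - (h x + (y - x) *\<^sub>R ?g))"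
  have remainder: "norm (?R y) = norm (diff_quot h x y - ?g)" if "y \<noteq> x" for y
  proof -
    have "(1 / (y - x)) *\<^sub>R (h y - (h x + (y - x) *\<^sub>R ?g)) =
        (1 / (y - x)) *\<^sub>R (h y - h x) - (1 / (y - x)) *\<^sub>R ((y - x) *\<^sub>R ?g)"
      by (simp only: diff_diff_eq[symmetric] scaleR_diff_right)
    also have "\<dots> = diff_quot h x y - ?g"
      using that by (simp add: diff_quot_def)
    finally have "diff_quot h x y - ?g = (1 / (y - x)) *\<^sub>R (h y - (h x + (y - x) *\<^sub>R ?g))"
      by (rule sym)
    then show ?thesis
      by simp
  qed
  show "(?R \<longlongrightarrow> 0) (at x within {0..1})"
    unfolding tendsto_iff
  proof (intro allI impI)
    fix e :: real assume "e > 0"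
    then obtain d where d: "d > 0" "diff_quot_osc h (e/2) d"
      using h by (auto simp: diff_quot_cauchy_def dest: spec[of _ "e/2"])
    have close: "dist (?R y) 0 < e" if "y \<in> {0..1}" "y \<noteq> x" "dist y x < d" for y
    proof -
      have "norm (diff_quot h x y - ?g) \<le> e/2"
        using norm_diff_quot_minus_lim_le[OF d(2) x that(1) x] that d(1) by (simp add: dist_real_def)
      moreover have "dist (?R y) 0 = norm (diff_quot h x y - ?g)"
        using remainder[OF that(2)] by (simp only: dist_norm diff_zero)
      ultimately show ?thesis
        using \<open>e > 0\<close> by linarith
    qed
    show "\<forall>\<^sub>F y in at x within {0..1}. dist (?R y) 0 < e"
      unfolding eventually_at
    proof (intro exI[of _ d] conjI ballI impI)
      fix y assume "y \<in> {0..1}" "y \<noteq> x \<and> dist y x < d"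
      then show "dist (?R y) 0 < e"
        using close by blast
    qed (fact d(1))
  qed
qed

lemma continuous_on_diff_quot_lim: "continuous_on {0..1} (diff_quot_lim h)"
  unfolding continuous_on_iff
proof (intro ballI allI impI)
  fix x e :: real assume x: "x \<in> {0..1}" and "e > 0"
  then obtain d where d: "d > 0" "diff_quot_osc h (e/3) d"
    using h by (auto simp: diff_quot_cauchy_def dest: spec[of _ "e/3"])
  obtain N where N: "\<forall>n\<ge>N. \<bar>near_point n x - x\<bar> < d"
    using eventually_near_point_close[OF d(1) x] by blast
  define t where "t = near_point N x"
  have t: "t \<in> {0..1}" "x \<noteq> t" "\<bar>t - x\<bar> < d"
    using near_point(1,2)[OF x, of N] N by (auto simp: t_def)
  have "dist (diff_quot_lim h x') (diff_quot_lim h x) < e" if x': "x' \<in> {0..1}" "dist x' x < d" for x'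
  proof -
    have "norm (diff_quot h x t - diff_quot_lim h x') \<le> e/3"
      using norm_diff_quot_minus_lim_le[OF d(2) x t(1) x'(1) t(2)] x'(2) t(3)
      by (simp add: dist_real_def abs_minus_commute)
    moreover have "norm (diff_quot h x t - diff_quot_lim h x) \<le> e/3"
      using norm_diff_quot_minus_lim_le[OF d(2) x t(1) x t(2)] t d by auto
    ultimately show ?thesis
      using norm_triangle_ineq4[of "diff_quot h x t - diff_quot_lim h x" "diff_quot h x t - diff_quot_lim h x'"]
        \<open>e > 0\<close> by (simp add: dist_norm norm_minus_commute)
  qed
  then show "\<exists>d>0. \<forall>x'\<in>{0..1}. dist x' x < d \<longrightarrow> dist (diff_quot_lim h x') (diff_quot_lim h x) < e"
    using d(1) by blast
qed

end

lemma C1_iff_diff_quot_cauchy: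
  fixes h :: "real \<Rightarrow> 'a::banach"
  shows "(\<exists>g. continuous_on {0..1} g \<and> (\<forall>t\<in>{0..1}. (h has_vector_derivative g t) (at t within {0..1})))
    \<longleftrightarrow> diff_quot_cauchy h"
proof
  show "\<exists>g. continuous_on {0..1} g \<and> (\<forall>t\<in>{0..1}. (h has_vector_derivative g t) (at t within {0..1}))"
    if "diff_quot_cauchy h"
    using continuous_on_diff_quot_lim[OF that] diff_quot_cauchy_has_vector_derivative[OF that] by blast
next
  assume "\<exists>g. continuous_on {0..1} g \<and> (\<forall>t\<in>{0..1}. (h has_vector_derivative g t) (at t within {0..1}))"
  then obtain g where "continuous_on {0..1} g"
    "\<And>t. t \<in> {0..1} \<Longrightarrow> (h has_vector_derivative g t) (at t within {0..1})"
    by blast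
  then show "diff_quot_cauchy h"
    by (rule C1_imp_diff_quot_cauchy[rotated])
qed

section \<open>Measurability of C1y and d2\<close>

lemma C1y_eq_diff_quot_cauchy: "C1y = {w \<in> Cpaths. diff_quot_cauchy (\<lambda>s. snd (w s))}"
  unfolding C1y_def using C1_iff_diff_quot_cauchy by blast

lemma sets_Cborel_sublevelI:
  fixes \<phi> :: "'i \<Rightarrow> (real \<Rightarrow> 'b::metric_space) \<Rightarrow> real"
  assumes "\<And>i w w'. i \<in> I \<Longrightarrow> w \<in> Cpaths \<Longrightarrow> w' \<in> Cpaths \<Longrightarrow> \<phi> i w - \<phi> i w' \<le> c i * sup_dist w w'"
    and "\<And>i. i \<in> I \<Longrightarrow> c i > 0"
  shows "{w \<in> Cpaths. \<forall>i\<in>I. \<phi> i w \<le> e} \<in> sets Cborel"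
proof (rule sets_Cborel_closedI)
  fix w assume w: "w \<in> Cpaths" "w \<notin> {w \<in> Cpaths. \<forall>i\<in>I. \<phi> i w \<le> e}"
  then obtain i where i: "i \<in> I" "\<phi> i w > e"
    by auto
  define r where "r = (\<phi> i w - e) / c i"
  have c: "c i > 0"
    using assms(2)[OF i(1)] .
  then have "r > 0"
    using i by (simp add: r_def)
  have "\<not> \<phi> i w' \<le> e" if "w' \<in> Cpaths" "sup_dist w w' < r" for w'
  proof -
    have "c i * sup_dist w w' < c i * r"
      using c that(2) by simp
    also have "\<dots> = \<phi> i w - e"
      using c by (simp add: r_def)
    finally show ?thesis
      using assms(1)[OF i(1) w(1) that(1)] by linarith
  qed
  then show "\<exists>r>0. \<forall>w'\<in>Cpaths. sup_dist w w' < r \<longrightarrow> w' \<notin> {w \<in> Cpaths. \<forall>i\<in>I. \<phi> i w \<le> e}"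
    using \<open>r > 0\<close> i(1) by blast
qed auto

lemma norm_diff_quot_snd_diff_le:
  fixes w w' :: "real \<Rightarrow> 'a::real_normed_vector \<times> 'a"
  assumes "w \<in> Cpaths" "w' \<in> Cpaths" "s \<noteq> t"
  shows "norm (diff_quot (\<lambda>s. snd (w s)) s t - diff_quot (\<lambda>s. snd (w' s)) s t) \<le>
    2 / \<bar>t - s\<bar> * sup_dist w w'"
proof -
  have b: "norm (snd (w u) - snd (w' u)) \<le> sup_dist w w'" for u
    using dist_snd_le[of "w u" "w' u"] dist_le_sup_dist[OF assms(1,2), of u] by (simp add: dist_norm)
  have "diff_quot (\<lambda>s. snd (w s)) s t - diff_quot (\<lambda>s. snd (w' s)) s t =
      (1 / (t - s)) *\<^sub>R ((snd (w t) - snd (w' t)) - (snd (w s) - snd (w' s)))"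
    by (simp add: diff_quot_def algebra_simps)
  then have "norm (diff_quot (\<lambda>s. snd (w s)) s t - diff_quot (\<lambda>s. snd (w' s)) s t) =
      norm ((snd (w t) - snd (w' t)) - (snd (w s) - snd (w' s))) / \<bar>t - s\<bar>"
    by simp
  also have "\<dots> \<le> (sup_dist w w' + sup_dist w w') / \<bar>t - s\<bar>"
    using b[of t] b[of s] norm_triangle_ineq4[of "snd (w t) - snd (w' t)" "snd (w s) - snd (w' s)"]
    by (intro divide_right_mono) auto
  finally show ?thesis
    by simp
qed

lemma diff_quot_osc_snd_in_sets_Cborel:
  "{w \<in> (Cpaths :: (real \<Rightarrow> 'a::real_normed_vector \<times> 'a) set). diff_quot_osc (\<lambda>s. snd (w s)) e d}
    \<in> sets Cborel"
proof -
  define I where "I = {(s, t, s', t'). s \<in> {0..1} \<and> t \<in> {0..1} \<and> s' \<in> {0..1} \<and> t' \<in> {0..1} \<and>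
    s \<noteq> t \<and> s' \<noteq> t' \<and> \<bar>s - s'\<bar> < d \<and> \<bar>t - s\<bar> < d \<and> \<bar>t' - s'\<bar> < d}"
  define \<phi> where "\<phi> = (\<lambda>(s, t, s', t') (w :: real \<Rightarrow> 'a \<times> 'a).
    norm (diff_quot (\<lambda>s. snd (w s)) s t - diff_quot (\<lambda>s. snd (w s)) s' t'))"
  define c where "c = (\<lambda>(s, t, s', t'). 2 / \<bar>t - s\<bar> + 2 / \<bar>t' - s'\<bar> :: real)"
  have "{w \<in> Cpaths. \<forall>i\<in>I. \<phi> i w \<le> e} \<in> sets Cborel"
  proof (rule sets_Cborel_sublevelI)
    fix i and w w' :: "real \<Rightarrow> 'a \<times> 'a"
    assume "i \<in> I" "w \<in> Cpaths" "w' \<in> Cpaths"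
    then obtain s t s' t' where i: "i = (s, t, s', t')" "s \<noteq> t" "s' \<noteq> t'"
      by (auto simp: I_def)
    let ?A = "diff_quot (\<lambda>s. snd (w s)) s t" and ?B = "diff_quot (\<lambda>s. snd (w s)) s' t'"
    let ?A' = "diff_quot (\<lambda>s. snd (w' s)) s t" and ?B' = "diff_quot (\<lambda>s. snd (w' s)) s' t'"
    have "norm (?A - ?B) - norm (?A' - ?B') \<le> norm ((?A - ?A') - (?B - ?B'))"
      using norm_triangle_ineq2[of "?A - ?B" "?A' - ?B'"] by (simp add: algebra_simps)
    also have "\<dots> \<le> norm (?A - ?A') + norm (?B - ?B')"
      by (rule norm_triangle_ineq4)
    also have "\<dots> \<le> 2 / \<bar>t - s\<bar> * sup_dist w w' + 2 / \<bar>t' - s'\<bar> * sup_dist w w'"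
      using i by (intro add_mono norm_diff_quot_snd_diff_le \<open>w \<in> Cpaths\<close> \<open>w' \<in> Cpaths\<close>)
    finally show "\<phi> i w - \<phi> i w' \<le> c i * sup_dist w w'"
      by (simp add: i \<phi>_def c_def algebra_simps)
  qed (auto simp: I_def c_def intro!: add_pos_pos)
  moreover have "{w \<in> Cpaths. \<forall>i\<in>I. \<phi> i w \<le> e} =
      {w \<in> Cpaths. diff_quot_osc (\<lambda>s. snd (w s)) e d}"
    by (auto simp: I_def \<phi>_def diff_quot_osc_def)
  ultimately show ?thesis
    by simp
qed

lemma C1y_in_sets_Cborel: "C1y \<in> sets Cborel"
proof -
  have "C1y = (\<Inter>m::nat. \<Union>k::nat.
      {w \<in> Cpaths. diff_quot_osc (\<lambda>s. snd (w s)) (inverse (real (Suc m))) (inverse (real (Suc k)))})"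
    unfolding C1y_eq_diff_quot_cauchy diff_quot_cauchy_iff_nat by auto
  also have "\<dots> \<in> sets Cborel"
    using diff_quot_osc_snd_in_sets_Cborel by (intro sets.countable_INT sets.countable_UN) auto
  finally show ?thesis .
qed

lemma pred_in_C1y: "Measurable.pred Cborel (\<lambda>w. w \<in> (C1y :: (real \<Rightarrow> 'a::euclidean_space \<times> 'a) set))"
proof -
  have "{w \<in> Cpaths. w \<in> C1y} = (C1y :: (real \<Rightarrow> 'a \<times> 'a) set)"
    by (auto simp: C1y_def)
  then show ?thesis
    unfolding pred_def space_Cborel using C1y_in_sets_Cborel by simp
qed

lemma d2_eq_diff_quot_lim:
  assumes "w \<in> C1y"
  shows "d2 w t = diff_quot_lim (\<lambda>s. snd (w s)) (clamp01 t)"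
proof -
  have "diff_quot_cauchy (\<lambda>s. snd (w s))"
    using assms by (simp add: C1y_eq_diff_quot_cauchy)
  then have "((\<lambda>s. snd (w s)) has_vector_derivative diff_quot_lim (\<lambda>s. snd (w s)) (clamp01 t))
      (at (clamp01 t) within {0..1})"
    by (rule diff_quot_cauchy_has_vector_derivative[OF _ clamp01_in])
  then have "vector_derivative (\<lambda>s. snd (w s)) (at (clamp01 t) within {0..1}) =
      diff_quot_lim (\<lambda>s. snd (w s)) (clamp01 t)"
    by (intro vector_derivative_within_closed_interval) (auto simp: clamp01_in)
  then show ?thesis
    using assms by (simp add: d2_def)
qed

lemma d2_in_Cpaths: "d2 w \<in> Cpaths"
proof (cases "w \<in> C1y")
  case True
  then have "continuous_on {0..1} (diff_quot_lim (\<lambda>s. snd (w s)))"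
    by (intro continuous_on_diff_quot_lim) (simp add: C1y_eq_diff_quot_cauchy)
  then have "continuous_on {0..1} (\<lambda>t. diff_quot_lim (\<lambda>s. snd (w s)) (clamp01 t))"
    by (rule continuous_on_compose2[OF _ continuous_on_clamp01]) (auto simp: clamp01_in)
  moreover have "clamp01 (clamp01 t) = clamp01 t" for t
    by (simp add: clamp01_id clamp01_in)
  ultimately show ?thesis
    using True by (simp add: Cpaths_def d2_eq_diff_quot_lim)
qed (simp add: Cpaths_def d2_def)

lemma measurable_fst_apply_Cborel:
  "(\<lambda>w. fst (w t)) \<in> borel_measurable (Cborel :: (real \<Rightarrow> 'a::metric_space \<times> 'b::metric_space) measure)"
  using measurable_compose[OF measurable_apply_Cborel[of t] borel_measurable_continuous_onI[OF continuous_on_fst[OF continuous_on_id]]]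
  by simp

lemma measurable_snd_apply_Cborel:
  "(\<lambda>w. snd (w t)) \<in> borel_measurable (Cborel :: (real \<Rightarrow> 'a::metric_space \<times> 'b::metric_space) measure)"
  using measurable_compose[OF measurable_apply_Cborel[of t] borel_measurable_continuous_onI[OF continuous_on_snd[OF continuous_on_id]]]
  by simp

lemma measurable_d2: "(d2 :: (real \<Rightarrow> 'b::euclidean_space \<times> 'b) \<Rightarrow> _) \<in> Cborel \<rightarrow>\<^sub>M Cborel"
proof (rule measurable_CborelI)
  fix t :: real
  define c where "c = clamp01 t"
  have c: "c \<in> {0..1}"
    by (simp add: c_def clamp01_in)
  define f where "f n w = (if w \<in> C1y then diff_quot (\<lambda>s. snd (w s)) c (near_point n c) else 0)"
    for n and w :: "real \<Rightarrow> 'b \<times> 'b"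
  note measurable_snd_apply_Cborel [measurable]
  have "(\<lambda>w :: real \<Rightarrow> 'b \<times> 'b. diff_quot (\<lambda>s. snd (w s)) c (near_point n c)) \<in> borel_measurable Cborel" for n
    unfolding diff_quot_def by measurable
  then have "f n \<in> borel_measurable Cborel" for n
    unfolding f_def using sets.Int[OF C1y_in_sets_Cborel sets.top] by (intro measurable_If_set) auto
  moreover have "(\<lambda>n. f n w) \<longlonglongrightarrow> d2 w t" for w
  proof (cases "w \<in> C1y")
    case True
    then have "diff_quot_cauchy (\<lambda>s. snd (w s))"
      by (simp add: C1y_eq_diff_quot_cauchy)
    from diff_quot_near_point_LIMSEQ[OF this c] show ?thesis
      using True by (simp add: f_def d2_eq_diff_quot_lim c_def)
  qed (simp add: f_def d2_def)
  ultimately show "(\<lambda>w :: real \<Rightarrow> 'b \<times> 'b. d2 w t) \<in> borel_measurable Cborel"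
    by (rule borel_measurable_LIMSEQ_metric)
qed (rule d2_in_Cpaths)

lemma snd_const_if_d2_eq_0:
  assumes "w \<in> C1y" "d2 w = (\<lambda>t. 0)"
  shows "snd (w t) = snd (w 0)"
proof -
  obtain g where g: "\<And>s. s \<in> {0..1} \<Longrightarrow> ((\<lambda>s. snd (w s)) has_vector_derivative g s) (at s within {0..1})"
    using assms(1) unfolding C1y_def by blast
  have "g s = 0" if "s \<in> {0..1}" for s
  proof -
    have "vector_derivative (\<lambda>s. snd (w s)) (at s within {0..1}) = g s"
      by (rule vector_derivative_within_closed_interval[OF _ that g[OF that]]) simp
    moreover have "d2 w s = vector_derivative (\<lambda>s. snd (w s)) (at s within {0..1})"
      using assms(1) that by (simp add: d2_def clamp01_id)
    ultimately show ?thesis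
      using assms(2) by simp
  qed
  then obtain c where c: "\<And>s. s \<in> {0..1} \<Longrightarrow> snd (w s) = c"
    using has_derivative_zero_constant[of "{0..1}" "\<lambda>s. snd (w s)"] g
    by (force simp: has_vector_derivative_def)
  have "w \<in> Cpaths"
    using assms(1) by (simp add: C1y_def)
  then show ?thesis
    using c[of "clamp01 t"] c[of 0] by (simp add: Cpaths_clamp01 clamp01_in)
qed

definition pair_path :: "(real \<Rightarrow> 'a) \<Rightarrow> 'b \<Rightarrow> real \<Rightarrow> 'a \<times> 'b" where
  "pair_path \<theta> z = (\<lambda>t. (\<theta> t, z))"

lemma p1_pair_path [simp]: "p1 (pair_path \<theta> z) = \<theta>"
  by (simp add: p1_def pair_path_def)

lemma pair_path_in_Cpaths: "\<theta> \<in> Cpaths \<Longrightarrow> pair_path \<theta> z \<in> Cpaths"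
  by (auto simp: Cpaths_def pair_path_def intro!: continuous_intros)

lemma pair_path_in_C1y:
  assumes "\<theta> \<in> Cpaths"
  shows "pair_path \<theta> z \<in> C1y"
  using pair_path_in_Cpaths[OF assms]
  by (auto simp: C1y_def pair_path_def intro!: exI[of _ "\<lambda>_. 0"])

lemma d2_pair_path:
  assumes "\<theta> \<in> Cpaths"
  shows "d2 (pair_path \<theta> z) = (\<lambda>t. 0)"
proof -
  have "vector_derivative (\<lambda>s. snd (pair_path \<theta> z s)) (at (clamp01 t) within {0..1}) = 0" for t
    by (rule vector_derivative_within_closed_interval) (auto simp: pair_path_def clamp01_in)
  then show ?thesis
    using pair_path_in_C1y[OF assms] by (simp add: d2_def)
qed

lemma measurable_pair_path:
  "(\<lambda>(\<theta>, z). pair_path \<theta> z) \<in> Cborel \<Otimes>\<^sub>M borel \<rightarrow>\<^sub>M (Cborel :: (real \<Rightarrow> 'a::euclidean_space \<times> 'a) measure)"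
proof (rule measurable_CborelI)
  fix x :: "(real \<Rightarrow> 'a) \<times> 'a"
  assume "x \<in> space (Cborel \<Otimes>\<^sub>M borel)"
  then show "(case x of (\<theta>, z) \<Rightarrow> pair_path \<theta> z) \<in> Cpaths"
    by (auto simp: space_pair_measure space_Cborel pair_path_in_Cpaths split: prod.split)
next
  fix t :: real
  show "(\<lambda>x :: (real \<Rightarrow> 'a) \<times> 'a. (case x of (\<theta>, z) \<Rightarrow> pair_path \<theta> z) t) \<in> borel_measurable (Cborel \<Otimes>\<^sub>M borel)"
  proof -
    have "(\<lambda>x :: (real \<Rightarrow> 'a) \<times> 'a. fst x t) \<in> borel_measurable (Cborel \<Otimes>\<^sub>M borel)"
      using measurable_compose[OF measurable_fst[of Cborel borel] measurable_apply_Cborel[of t]] by simp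
    from borel_measurable_Pair[OF this measurable_snd] show ?thesis
      by (simp add: pair_path_def case_prod_beta)
  qed
qed

lemma measurable_pair_path_left:
  assumes "\<theta> \<in> Cpaths"
  shows "pair_path \<theta> \<in> borel \<rightarrow>\<^sub>M (Cborel :: (real \<Rightarrow> 'a::euclidean_space \<times> 'a) measure)"
proof (rule measurable_CborelI)
  show "pair_path \<theta> z \<in> Cpaths" for z
    using pair_path_in_Cpaths[OF assms] .
qed (simp add: pair_path_def)

lemma measurable_pair_path_initial:
  fixes v :: "'a::euclidean_space \<Rightarrow> 'a"
  assumes v: "v \<in> borel_measurable borel"
  shows "(\<lambda>\<theta>. pair_path \<theta> (v (\<theta> 0))) \<in> Cborel \<rightarrow>\<^sub>M Cborel"
proof (rule measurable_CborelI)
  show "pair_path \<theta> (v (\<theta> 0)) \<in> Cpaths" if "\<theta> \<in> space Cborel" for \<theta>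
    using that by (simp add: space_Cborel pair_path_in_Cpaths)
  have "(\<lambda>\<theta> :: real \<Rightarrow> 'a. v (\<theta> 0)) \<in> borel_measurable Cborel"
    using measurable_compose[OF measurable_apply_Cborel[of 0] v] by simp
  from borel_measurable_Pair[OF measurable_apply_Cborel this]
  show "(\<lambda>\<theta>. pair_path \<theta> (v (\<theta> 0)) t) \<in> borel_measurable Cborel" for t
    by (simp add: pair_path_def)
qed

lemma measurable_p1: "(p1 :: (real \<Rightarrow> 'a::euclidean_space \<times> 'a) \<Rightarrow> _) \<in> Cborel \<rightarrow>\<^sub>M Cborel"
proof (rule measurable_CborelI)
  fix w :: "real \<Rightarrow> 'a \<times> 'a"
  assume "w \<in> space Cborel"
  then have "continuous_on {0..1} (\<lambda>t. fst (w t))" "\<And>t. fst (w (clamp01 t)) = fst (w t)"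
    by (auto simp: space_Cborel Cpaths_clamp01 intro: continuous_on_fst Cpaths_continuous_on)
  then show "p1 w \<in> Cpaths"
    by (simp add: Cpaths_def p1_def)
qed (simp add: p1_def measurable_fst_apply_Cborel)

section \<open>Existence\<close>

definition constant_transport ::
  "('a::euclidean_space \<Rightarrow> 'a measure) \<Rightarrow> (real \<Rightarrow> 'a) measure \<Rightarrow> (real \<Rightarrow> 'a \<times> 'a) measure" where
  "constant_transport \<psi> \<eta> = \<eta> \<bind> (\<lambda>\<theta>. distr (\<psi> (\<theta> 0)) Cborel (pair_path \<theta>))"

context
  fixes \<psi> :: "'a::euclidean_space \<Rightarrow> 'a measure" and \<eta> :: "(real \<Rightarrow> 'a) measure"
  assumes \<psi>: "\<psi> \<in> borel \<rightarrow>\<^sub>M prob_algebra borel" and \<eta>: "is_path_prob \<eta>"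
begin

private lemma sets_path_measure: "sets \<eta> = sets Cborel" and space_path_measure: "space \<eta> = Cpaths"
  using \<eta> by (auto simp: is_path_prob_def)

private lemma sets_kernel: "sets (\<psi> x) = sets borel" and prob_space_kernel: "prob_space (\<psi> x)"
  using measurable_space[OF \<psi>, of x] by (auto simp: space_prob_algebra)

lemma measurable_constant_kernel:
  "(\<lambda>\<theta>. distr (\<psi> (\<theta> 0)) Cborel (pair_path \<theta>)) \<in> \<eta> \<rightarrow>\<^sub>M prob_algebra Cborel"
proof -
  have "(\<lambda>\<theta>. \<psi> (\<theta> 0)) \<in> Cborel \<rightarrow>\<^sub>M prob_algebra borel"
    using measurable_compose[OF measurable_apply_Cborel \<psi>] .
  from measurable_distr_prob_space2[OF this measurable_pair_path]
  show ?thesis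
    using measurable_cong_sets[OF sets_path_measure refl] by blast
qed

lemma distr_constant_transport:
  assumes "g \<in> Cborel \<rightarrow>\<^sub>M N"
  shows "distr (constant_transport \<psi> \<eta>) N g = \<eta> \<bind> (\<lambda>\<theta>. distr (\<psi> (\<theta> 0)) N (g \<circ> pair_path \<theta>))"
proof -
  have "space \<eta> \<noteq> {}"
    using \<eta> prob_space.not_empty by (auto simp: is_path_prob_def)
  then have "distr (constant_transport \<psi> \<eta>) N g =
      \<eta> \<bind> (\<lambda>\<theta>. distr (distr (\<psi> (\<theta> 0)) Cborel (pair_path \<theta>)) N g)"
    unfolding constant_transport_def
    by (rule distr_bind[OF measurable_prob_algebraD[OF measurable_constant_kernel] _ assms])
  also have "\<dots> = \<eta> \<bind> (\<lambda>\<theta>. distr (\<psi> (\<theta> 0)) N (g \<circ> pair_path \<theta>))"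
  proof (rule bind_cong[OF refl])
    fix \<theta> assume "\<theta> \<in> space \<eta>"
    then have "pair_path \<theta> \<in> \<psi> (\<theta> 0) \<rightarrow>\<^sub>M Cborel"
      using measurable_pair_path_left measurable_cong_sets[OF sets_kernel refl] by (auto simp: space_path_measure)
    then show "distr (distr (\<psi> (\<theta> 0)) Cborel (pair_path \<theta>)) N g = distr (\<psi> (\<theta> 0)) N (g \<circ> pair_path \<theta>)"
      by (rule distr_distr[OF assms])
  qed
  finally show ?thesis .
qed

lemma distr_constant_transport_eq_bind_return:
  assumes "\<And>\<theta> z. \<theta> \<in> Cpaths \<Longrightarrow> g (pair_path \<theta> z) = c \<theta>" "\<And>\<theta>. \<theta> \<in> Cpaths \<Longrightarrow> c \<theta> \<in> space N"
    and "g \<in> Cborel \<rightarrow>\<^sub>M N"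
  shows "distr (constant_transport \<psi> \<eta>) N g = \<eta> \<bind> (\<lambda>\<theta>. return N (c \<theta>))"
  unfolding distr_constant_transport[OF assms(3)]
proof (rule bind_cong[OF refl])
  fix \<theta> assume "\<theta> \<in> space \<eta>"
  then have "distr (\<psi> (\<theta> 0)) N (g \<circ> pair_path \<theta>) = distr (\<psi> (\<theta> 0)) N (\<lambda>_. c \<theta>)"
    using assms(1) by (simp add: space_path_measure comp_def)
  also have "\<dots> = return N (c \<theta>)"
    using assms(2) \<open>\<theta> \<in> space \<eta>\<close> by (intro prob_space.distr_const prob_space_kernel) (simp add: space_path_measure)
  finally show "distr (\<psi> (\<theta> 0)) N (g \<circ> pair_path \<theta>) = return N (c \<theta>)" .
qed

lemma constant_transport_is_path_prob: "is_path_prob (constant_transport \<psi> \<eta>)"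
proof -
  have "\<eta> \<in> space (prob_algebra Cborel)"
    using \<eta> by (simp add: space_prob_algebra is_path_prob_def)
  moreover note kernel = measurable_constant_kernel[unfolded measurable_cong_sets[OF sets_path_measure refl]]
  ultimately have "prob_space (constant_transport \<psi> \<eta>)" "sets (constant_transport \<psi> \<eta>) = sets Cborel"
    unfolding constant_transport_def by (rule prob_space_bind', rule sets_bind')
  then show ?thesis
    using sets_eq_imp_space_eq[of "constant_transport \<psi> \<eta>" Cborel] by (simp add: is_path_prob_def space_Cborel)
qed

lemma AE_constant_transport_C1y: "AE w in constant_transport \<psi> \<eta>. w \<in> C1y"
  unfolding constant_transport_def
proof (subst AE_bind[OF measurable_prob_algebraD[OF measurable_constant_kernel]])
  show "Measurable.pred Cborel (\<lambda>w. w \<in> C1y)"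
    by (rule pred_in_C1y)
  show "AE \<theta> in \<eta>. AE w in distr (\<psi> (\<theta> 0)) Cborel (pair_path \<theta>). w \<in> C1y"
  proof (rule AE_I2)
    fix \<theta> assume "\<theta> \<in> space \<eta>"
    then have "pair_path \<theta> \<in> \<psi> (\<theta> 0) \<rightarrow>\<^sub>M Cborel" "\<theta> \<in> Cpaths"
      using measurable_pair_path_left measurable_cong_sets[OF sets_kernel refl] by (auto simp: space_path_measure)
    then show "AE w in distr (\<psi> (\<theta> 0)) Cborel (pair_path \<theta>). w \<in> C1y"
      using pred_in_C1y by (subst AE_distr_iff) (auto simp: pred_def pair_path_in_C1y)
  qed
qed

lemma distr_p1_constant_transport: "distr (constant_transport \<psi> \<eta>) Cborel p1 = \<eta>"
proof -
  have "distr (constant_transport \<psi> \<eta>) Cborel p1 = \<eta> \<bind> return Cborel"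
    by (rule distr_constant_transport_eq_bind_return[OF _ _ measurable_p1]) (simp_all add: space_Cborel)
  also have "\<dots> = \<eta>"
    by (rule bind_return''[OF sets_path_measure])
  finally show ?thesis .
qed

lemma distr_d2_constant_transport: "distr (constant_transport \<psi> \<eta>) Cborel d2 = return Cborel (\<lambda>t. 0)"
proof -
  have "distr (constant_transport \<psi> \<eta>) Cborel d2 = \<eta> \<bind> (\<lambda>_. return Cborel (\<lambda>t. 0))"
    by (rule distr_constant_transport_eq_bind_return[OF _ _ measurable_d2]) (simp_all add: d2_pair_path space_Cborel)
  also have "\<dots> = return Cborel (\<lambda>t. 0)"
    using \<eta> by (intro bind_const' subprob_space_return) (simp_all add: is_path_prob_def space_Cborel)
  finally show ?thesis .
qed

lemma distr_ev0_constant_transport: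
  "distr (constant_transport \<psi> \<eta>) borel (ev 0) = joint (distr \<eta> borel (ev 0)) \<psi>"
proof -
  define G where "G x = distr (\<psi> x) borel (\<lambda>z. (x, z))" for x
  have G: "G \<in> borel \<rightarrow>\<^sub>M subprob_algebra borel"
    unfolding G_def using measurable_prob_algebraD[OF \<psi>]
    by (rule measurable_distr2[rotated]) (simp add: borel_prod)
  have "distr (constant_transport \<psi> \<eta>) borel (ev 0) = \<eta> \<bind> (\<lambda>\<theta>. G (ev 0 \<theta>))"
    by (simp add: distr_constant_transport[OF measurable_ev_Cborel] comp_def G_def ev_def pair_path_def)
  also have "\<dots> = distr \<eta> borel (ev 0) \<bind> G"
    using \<eta> measurable_ev_Cborel measurable_cong_sets[OF sets_path_measure refl]
    by (intro bind_distr[symmetric, OF _ G]) (auto simp: is_path_prob_def prob_space.not_empty)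
  finally show ?thesis
    by (simp add: joint_def G_def[abs_def])
qed

lemma parallel_transport_constant_transport:
  "parallel_transport (distr \<eta> borel (ev 0)) \<psi> \<eta> (constant_transport \<psi> \<eta>)"
  unfolding parallel_transport_def
  using constant_transport_is_path_prob AE_constant_transport_C1y distr_p1_constant_transport
    distr_d2_constant_transport distr_ev0_constant_transport by blast

end

section \<open>Uniqueness\<close>

lemma measure_eq_distr_of_AE_factor:
  assumes "sets M = sets K" "g \<in> M \<rightarrow>\<^sub>M N" "H \<in> N \<rightarrow>\<^sub>M K" "AE x in M. x = H (g x)"
  shows "M = distr (distr M N g) K H"
proof -
  have "M = distr M K (\<lambda>x. x)"
    using distr_id2[OF assms(1)[symmetric]] by simp
  also have "\<dots> = distr M K (\<lambda>x. H (g x))"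
    using assms by (intro distr_cong_AE) (auto simp: measurable_ident_sets)
  also have "\<dots> = distr (distr M N g) K H"
    using distr_distr[OF assms(3,2)] by (simp add: comp_def)
  finally show ?thesis .
qed

lemma emeasure_cyl_eq_initial_law:
  fixes M :: "(real \<Rightarrow> 'b::euclidean_space) measure"
  assumes M: "sets M = sets Cborel" and \<Phi>: "\<And>t. \<Phi> t \<in> borel_measurable borel"
    and flow: "AE w in M. \<forall>t\<in>{0..1}. w t = \<Phi> t (w 0)"
    and F: "finite F" "\<And>t. t \<in> F \<Longrightarrow> B t \<in> sets borel"
  shows "emeasure M (cyl F B) = emeasure (distr M borel (ev 0)) {x. \<forall>t\<in>F. \<Phi> (clamp01 t) x \<in> B t}"
proof -
  let ?Q = "{x. \<forall>t\<in>F. \<Phi> (clamp01 t) x \<in> B t}"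
  have "{x \<in> space borel. \<forall>t\<in>F. \<Phi> (clamp01 t) x \<in> B t} \<in> sets borel"
    using F by (intro sets.sets_Collect_finite_All pred_sets2[OF _ \<Phi>, unfolded pred_def])
  then have Q: "?Q \<in> sets borel"
    by simp
  have ev0: "ev 0 \<in> M \<rightarrow>\<^sub>M borel"
    using measurable_ev_Cborel measurable_cong_sets[OF M refl] by blast
  have space_M: "space M = Cpaths"
    using sets_eq_imp_space_eq[OF M] by (simp add: space_Cborel)
  have "AE w in M. w \<in> cyl F B \<longleftrightarrow> w \<in> ev 0 -` ?Q \<inter> space M"
    using flow AE_space[of M]
  proof eventually_elim
    case (elim w)
    then have "w \<in> Cpaths"
      by (simp add: space_M)
    have "\<Phi> (clamp01 t) (w 0) = w t" for t
      using bspec[OF elim(1) clamp01_in, of t] Cpaths_clamp01[OF \<open>w \<in> Cpaths\<close>, of t] by (simp only:)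
    then show ?case
      using \<open>w \<in> Cpaths\<close> by (simp add: cyl_def ev_def space_M)
  qed
  then have "emeasure M (cyl F B) = emeasure M (ev 0 -` ?Q \<inter> space M)"
    using cyl_in_sets_Cborel[OF F] measurable_sets[OF ev0 Q] M by (intro emeasure_eq_AE) auto
  also have "\<dots> = emeasure (distr M borel (ev 0)) ?Q"
    by (rule emeasure_distr[OF ev0 Q, symmetric])
  finally show ?thesis .
qed

lemma measure_eqI_Cborel_initial_law:
  fixes M N :: "(real \<Rightarrow> 'b::euclidean_space) measure"
  assumes "sets M = sets Cborel" "sets N = sets Cborel" "finite_measure M"
    and "\<And>t. \<Phi> t \<in> borel_measurable borel"
    and "AE w in M. \<forall>t\<in>{0..1}. w t = \<Phi> t (w 0)" "AE w in N. \<forall>t\<in>{0..1}. w t = \<Phi> t (w 0)"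
    and "distr M borel (ev 0) = distr N borel (ev 0)"
  shows "M = N"
proof (rule measure_eqI_Cborel[OF assms(1-3)])
  fix F and B :: "real \<Rightarrow> 'b set"
  assume "finite F" "\<And>t. t \<in> F \<Longrightarrow> B t \<in> sets borel"
  then show "emeasure M (cyl F B) = emeasure N (cyl F B)"
    using emeasure_cyl_eq_initial_law[OF assms(1,4,5)] emeasure_cyl_eq_initial_law[OF assms(2,4,6)]
      assms(7) by simp
qed

lemma parallel_transport_sets:
  assumes "parallel_transport \<mu> \<psi> \<eta> \<Psi>"
  shows "sets \<Psi> = sets Cborel" "space \<Psi> = Cpaths" "prob_space \<Psi>"
  using assms by (auto simp: parallel_transport_def is_path_prob_def)

lemma AE_parallel_transport_snd_const:
  fixes \<Psi> :: "(real \<Rightarrow> 'a::euclidean_space \<times> 'a) measure"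
  assumes pt: "parallel_transport \<mu> \<psi> \<eta> \<Psi>"
  shows "AE w in \<Psi>. \<forall>t. snd (w t) = snd (w 0)"
proof -
  have d2: "d2 \<in> \<Psi> \<rightarrow>\<^sub>M Cborel"
    using measurable_d2 measurable_cong_sets[OF parallel_transport_sets(1)[OF pt] refl] by blast
  have "{x \<in> space Cborel. x = (\<lambda>t. 0 :: 'a)} = {\<lambda>t. 0}"
    by (auto simp: space_Cborel)
  then have "AE x in return Cborel (\<lambda>t. 0 :: 'a). x = (\<lambda>t. 0)"
    by (subst AE_return) (auto simp: space_Cborel pred_def singleton_in_sets_Cborel)
  moreover have "distr \<Psi> Cborel d2 = return Cborel (\<lambda>t. 0)"
    using pt by (simp add: parallel_transport_def)
  ultimately have "AE x in distr \<Psi> Cborel d2. x = (\<lambda>t. 0)"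
    by (simp only:)
  then have "AE w in \<Psi>. d2 w = (\<lambda>t. 0)"
    by (rule AE_distrD[OF d2])
  moreover have "AE w in \<Psi>. w \<in> C1y"
    using pt by (simp add: parallel_transport_def)
  ultimately show ?thesis
    by eventually_elim (blast intro: snd_const_if_d2_eq_0)
qed

lemma joint_return:
  assumes "sets \<mu> = sets borel" "v \<in> borel_measurable borel"
  shows "joint \<mu> (\<lambda>x. return borel (v x)) = distr \<mu> borel (\<lambda>x. (x, v x))"
proof -
  have "space \<mu> \<noteq> {}"
    using sets_eq_imp_space_eq[OF assms(1)] by simp
  moreover have "(\<lambda>x. (x, v x)) \<in> \<mu> \<rightarrow>\<^sub>M borel"
    using assms by (simp add: measurable_cong_sets[OF assms(1) refl])
  ultimately show ?thesis
    unfolding joint_def by (simp add: distr_return bind_return_distr')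
qed

lemma AE_joint_return:
  fixes v :: "'a::euclidean_space \<Rightarrow> 'a"
  assumes \<mu>: "sets \<mu> = sets borel" and v: "v \<in> borel_measurable borel"
  shows "AE p in joint \<mu> (\<lambda>x. return borel (v x)). snd p = v (fst p)"
proof -
  have fst: "(\<lambda>p :: 'a \<times> 'a. fst p) \<in> borel_measurable borel"
    and snd: "(\<lambda>p :: 'a \<times> 'a. snd p) \<in> borel_measurable borel"
    by (intro borel_measurable_continuous_onI continuous_intros)+
  have "{p \<in> space borel. snd p = v (fst p)} \<in> sets borel"
    by (rule measurable_equality_set[OF snd measurable_compose[OF fst v]])
  moreover have "(\<lambda>x. (x, v x)) \<in> \<mu> \<rightarrow>\<^sub>M borel"
    unfolding measurable_cong_sets[OF \<mu> refl] by (rule borel_measurable_Pair[OF _ v]) simp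
  ultimately show ?thesis
    unfolding joint_return[OF \<mu> v] by (subst AE_distr_iff) auto
qed

lemma parallel_transport_return_eq:
  fixes \<eta> :: "(real \<Rightarrow> 'a::euclidean_space) measure"
  assumes pt: "parallel_transport \<mu> \<psi> \<eta> \<Psi>"
    and v: "v \<in> borel_measurable borel" and \<psi>: "\<And>x. \<psi> x = return borel (v x)"
    and \<mu>: "sets \<mu> = sets borel"
  shows "\<Psi> = distr \<eta> Cborel (\<lambda>\<theta>. pair_path \<theta> (v (\<theta> 0)))"
proof -
  have "\<psi> = (\<lambda>x. return borel (v x))"
    using \<psi> by auto
  with pt have pt: "parallel_transport \<mu> (\<lambda>x. return borel (v x)) \<eta> \<Psi>"
    by simp
  note sets_\<Psi> = parallel_transport_sets(1)[OF pt]
  define H where "H \<theta> = pair_path \<theta> (v (\<theta> 0))" for \<theta> :: "real \<Rightarrow> 'a"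
  have H: "H \<in> Cborel \<rightarrow>\<^sub>M Cborel"
    unfolding H_def[abs_def] by (rule measurable_pair_path_initial[OF v])
  have p1: "p1 \<in> \<Psi> \<rightarrow>\<^sub>M Cborel"
    using measurable_p1 measurable_cong_sets[OF sets_\<Psi> refl] by blast
  have ev0: "ev 0 \<in> \<Psi> \<rightarrow>\<^sub>M borel"
    using measurable_ev_Cborel measurable_cong_sets[OF sets_\<Psi> refl] by blast
  have "distr \<Psi> borel (ev 0) = joint \<mu> (\<lambda>x. return borel (v x))"
    using pt by (simp add: parallel_transport_def)
  with AE_joint_return[OF \<mu> v] have "AE p in distr \<Psi> borel (ev 0). snd p = v (fst p)"
    by (simp only:)
  then have "AE w in \<Psi>. snd (ev 0 w) = v (fst (ev 0 w))"
    by (rule AE_distrD[OF ev0])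
  then have "AE w in \<Psi>. w = H (p1 w)"
    using AE_parallel_transport_snd_const[OF pt]
    by eventually_elim (auto simp: H_def pair_path_def p1_def ev_def fun_eq_iff prod_eq_iff)
  then have "\<Psi> = distr (distr \<Psi> Cborel p1) Cborel H"
    by (rule measure_eq_distr_of_AE_factor[OF sets_\<Psi> p1 H])
  then show ?thesis
    using pt by (simp add: parallel_transport_def H_def[abs_def])
qed

section \<open>Lipschitz ODEs and their flow\<close>

lemma gronwall:
  fixes u :: "real \<Rightarrow> real"
  assumes u: "continuous_on {0..T} u" and L: "L \<ge> 0"
    and ineq: "\<And>t. t \<in> {0..T} \<Longrightarrow> u t \<le> c + L * integral {0..t} u"
    and t: "t \<in> {0..T}"
  shows "u t \<le> c * exp (L * t)"
proof -
  define U where "U s = integral {0..s} u" for s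
  define V where "V s = exp (- (L * s)) * (c + L * U s)" for s
  define V' where "V' s = exp (- (L * s)) * L * (u s - c - L * U s)" for s
  have "(V has_real_derivative V' s) (at s within {0..t})" if "s \<in> {0..t}" for s
  proof -
    have "(U has_real_derivative u s) (at s within {0..T})"
      unfolding U_def using t that by (intro integral_has_real_derivative[OF u]) auto
    then have "(U has_real_derivative u s) (at s within {0..t})"
      by (rule DERIV_subset) (use t in auto)
    then show ?thesis
      unfolding V_def V'_def by (auto intro!: derivative_eq_intros simp: algebra_simps)
  qed
  then obtain s where s: "s \<in> {0..t}" "V t - V 0 = V' s * (t - 0)"
    using mvt_very_simple[of 0 t V "\<lambda>s h. V' s * h"] t by (auto simp: has_field_derivative_def)
  have "V' s \<le> 0"
    using ineq[of s] s t L by (auto simp: V'_def U_def mult_nonneg_nonpos)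
  then have "V' s * (t - 0) \<le> 0"
    using s by (intro mult_nonpos_nonneg) auto
  then have "exp (- (L * t)) * (c + L * U t) \<le> c"
    using s(2) by (simp add: V_def U_def)
  then have "c + L * U t \<le> c * exp (L * t)"
    by (simp add: exp_minus field_simps)
  then show ?thesis
    using ineq[OF t] by (simp add: U_def)
qed

lemma ode_rhs_integral:
  fixes f :: "real \<Rightarrow> 'a::euclidean_space \<Rightarrow> 'a"
  assumes f: "(\<lambda>(t, x). f t x) \<in> borel_measurable borel" and C: "\<forall>t\<in>{0..1}. \<forall>x. norm (f t x) \<le> C"
    and \<theta>: "\<theta> \<in> Cpaths" and t: "t \<in> {0..1}"
  shows "(\<lambda>s. f s (\<theta> s)) integrable_on {0..t}"
    and "(\<integral>s\<in>{0..t}. f s (\<theta> s) \<partial>lborel) = integral {0..t} (\<lambda>s. f s (\<theta> s))"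
proof -
  have "(\<lambda>s. (s, \<theta> s)) \<in> borel_measurable borel"
    using Cpaths_borel_measurable[OF \<theta>] by (intro borel_measurable_Pair) simp_all
  from measurable_compose[OF this f]
  have "(\<lambda>s. indicator {0..t} s *\<^sub>R f s (\<theta> s)) \<in> borel_measurable lborel"
    by simp
  then have "set_integrable lborel {0..t} (\<lambda>s. f s (\<theta> s))"
    unfolding set_integrable_def using C t
    by (intro integrableI_bounded_set[where A = "{0..t}" and B = C]) (auto simp: indicator_def)
  from set_borel_integral_eq_integral[OF this]
  show "(\<lambda>s. f s (\<theta> s)) integrable_on {0..t}"
    and "(\<integral>s\<in>{0..t}. f s (\<theta> s) \<partial>lborel) = integral {0..t} (\<lambda>s. f s (\<theta> s))"
    by auto
qed

lemma ode_solutions_dist_integral_le: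
  fixes f :: "real \<Rightarrow> 'a::euclidean_space \<Rightarrow> 'a"
  assumes f: "(\<lambda>(t, x). f t x) \<in> borel_measurable borel" and C: "\<forall>t\<in>{0..1}. \<forall>x. norm (f t x) \<le> C"
    and L: "\<forall>t\<in>{0..1}. L-lipschitz_on UNIV (f t)"
    and \<theta>: "\<theta> \<in> Cpaths" "\<forall>t\<in>{0..1}. \<theta> t = \<theta> 0 + (\<integral>s\<in>{0..t}. f s (\<theta> s) \<partial>lborel)"
    and \<theta>': "\<theta>' \<in> Cpaths" "\<forall>t\<in>{0..1}. \<theta>' t = \<theta>' 0 + (\<integral>s\<in>{0..t}. f s (\<theta>' s) \<partial>lborel)"
    and s: "s \<in> {0..1}"
  shows "dist (\<theta> s) (\<theta>' s) \<le> dist (\<theta> 0) (\<theta>' 0) + L * integral {0..s} (\<lambda>r. dist (\<theta> r) (\<theta>' r))"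
proof -
  note I = ode_rhs_integral[OF f C \<theta>(1) s] and I' = ode_rhs_integral[OF f C \<theta>'(1) s]
  have "\<theta> s = \<theta> 0 + integral {0..s} (\<lambda>r. f r (\<theta> r))"
    using bspec[OF \<theta>(2) s] unfolding I(2) .
  moreover have "\<theta>' s = \<theta>' 0 + integral {0..s} (\<lambda>r. f r (\<theta>' r))"
    using bspec[OF \<theta>'(2) s] unfolding I'(2) .
  ultimately have diff: "\<theta> s - \<theta>' s = (\<theta> 0 - \<theta>' 0) + integral {0..s} (\<lambda>r. f r (\<theta> r) - f r (\<theta>' r))"
    unfolding integral_diff[OF I(1) I'(1)] by (simp only:) (simp add: algebra_simps)
  have "norm (integral {0..s} (\<lambda>r. f r (\<theta> r) - f r (\<theta>' r))) \<le> integral {0..s} (\<lambda>r. L * dist (\<theta> r) (\<theta>' r))"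
  proof (rule integral_norm_bound_integral)
    show "(\<lambda>r. f r (\<theta> r) - f r (\<theta>' r)) integrable_on {0..s}"
      using I(1) I'(1) by (rule integrable_diff)
    have "continuous_on {0..s} (\<lambda>r. dist (\<theta> r) (\<theta>' r))"
      using Cpaths_continuous_on[OF \<theta>(1)] Cpaths_continuous_on[OF \<theta>'(1)] s
      by (intro continuous_intros) (auto intro: continuous_on_subset)
    then show "(\<lambda>r. L * dist (\<theta> r) (\<theta>' r)) integrable_on {0..s}"
      by (intro integrable_on_mult_right integrable_continuous_real)
    show "norm (f r (\<theta> r) - f r (\<theta>' r)) \<le> L * dist (\<theta> r) (\<theta>' r)" if "r \<in> {0..s}" for r
      using lipschitz_onD[OF bspec[OF L], of r "\<theta> r" "\<theta>' r"] that s by (simp add: dist_norm)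
  qed
  then show ?thesis
    using norm_triangle_ineq[of "\<theta> 0 - \<theta>' 0" "integral {0..s} (\<lambda>r. f r (\<theta> r) - f r (\<theta>' r))"]
    by (simp add: dist_norm diff)
qed

lemma ode_solutions_dist_le:
  fixes f :: "real \<Rightarrow> 'a::euclidean_space \<Rightarrow> 'a"
  assumes f: "(\<lambda>(t, x). f t x) \<in> borel_measurable borel" and C: "\<forall>t\<in>{0..1}. \<forall>x. norm (f t x) \<le> C"
    and L: "\<forall>t\<in>{0..1}. L-lipschitz_on UNIV (f t)"
    and \<theta>: "\<theta> \<in> Cpaths" "\<forall>t\<in>{0..1}. \<theta> t = \<theta> 0 + (\<integral>s\<in>{0..t}. f s (\<theta> s) \<partial>lborel)"
    and \<theta>': "\<theta>' \<in> Cpaths" "\<forall>t\<in>{0..1}. \<theta>' t = \<theta>' 0 + (\<integral>s\<in>{0..t}. f s (\<theta>' s) \<partial>lborel)"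
    and t: "t \<in> {0..1}"
  shows "dist (\<theta> t) (\<theta>' t) \<le> exp L * dist (\<theta> 0) (\<theta>' 0)"
proof -
  have "L \<ge> 0"
    using L lipschitz_on_nonneg[of L UNIV "f 0"] by auto
  have "continuous_on {0..1} (\<lambda>s. dist (\<theta> s) (\<theta>' s))"
    using Cpaths_continuous_on[OF \<theta>(1)] Cpaths_continuous_on[OF \<theta>'(1)] by (intro continuous_intros)
  from gronwall[OF this \<open>L \<ge> 0\<close> ode_solutions_dist_integral_le[OF f C L \<theta> \<theta>'] t]
  have "dist (\<theta> t) (\<theta>' t) \<le> dist (\<theta> 0) (\<theta>' 0) * exp (L * t)" .
  also have "\<dots> \<le> dist (\<theta> 0) (\<theta>' 0) * exp L"
    using t \<open>L \<ge> 0\<close> by (intro mult_left_mono) (auto simp: mult_left_le)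
  finally show ?thesis
    by (simp add: mult.commute)
qed

text \<open>The set of initial values need not be Borel; measurability of the flow is obtained by
  extending it, as a Lipschitz map, to the closure of that set.\<close>

lemma measurable_flow_of_lipschitz_initial:
  fixes S :: "(real \<Rightarrow> 'a::euclidean_space) set"
  assumes "K \<ge> 0"
    and lip: "\<And>\<theta> \<theta>' t. \<theta> \<in> S \<Longrightarrow> \<theta>' \<in> S \<Longrightarrow> t \<in> {0..1} \<Longrightarrow> dist (\<theta> t) (\<theta>' t) \<le> K * dist (\<theta> 0) (\<theta>' 0)"
  obtains \<Phi> where "\<And>t. \<Phi> t \<in> borel_measurable borel"
    and "\<And>\<theta> t. \<theta> \<in> S \<Longrightarrow> t \<in> {0..1} \<Longrightarrow> \<Phi> t (\<theta> 0) = \<theta> t"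
proof -
  define D where "D = (\<lambda>\<theta>. \<theta> 0) ` S"
  define \<Phi>\<^sub>0 where "\<Phi>\<^sub>0 t x = (SOME \<theta>. \<theta> \<in> S \<and> \<theta> 0 = x) t" for t x
  have \<Phi>\<^sub>0: "\<Phi>\<^sub>0 t (\<theta> 0) = \<theta> t" if "\<theta> \<in> S" "t \<in> {0..1}" for \<theta> t
  proof -
    define \<theta>' where "\<theta>' = (SOME \<theta>'. \<theta>' \<in> S \<and> \<theta>' 0 = \<theta> 0)"
    have "\<theta>' \<in> S" "\<theta>' 0 = \<theta> 0"
      unfolding \<theta>'_def using someI[of "\<lambda>\<theta>'. \<theta>' \<in> S \<and> \<theta>' 0 = \<theta> 0" \<theta>] that by auto
    then show ?thesis
      using lip[of \<theta>' \<theta> t] that by (simp add: \<Phi>\<^sub>0_def \<theta>'_def[symmetric])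
  qed
  have "K-lipschitz_on D (\<Phi>\<^sub>0 t)" if "t \<in> {0..1}" for t
  proof (rule lipschitz_onI[OF _ \<open>K \<ge> 0\<close>])
    fix x y assume "x \<in> D" "y \<in> D"
    then obtain \<theta> \<theta>' where "\<theta> \<in> S" "\<theta>' \<in> S" "x = \<theta> 0" "y = \<theta>' 0"
      by (auto simp: D_def)
    then show "dist (\<Phi>\<^sub>0 t x) (\<Phi>\<^sub>0 t y) \<le> K * dist x y"
      using lip[of \<theta> \<theta>' t] \<Phi>\<^sub>0 that by simp
  qed
  then have "\<forall>t. \<exists>g. t \<in> {0..1} \<longrightarrow> K-lipschitz_on (closure D) g \<and> (\<forall>x\<in>D. g x = \<Phi>\<^sub>0 t x)"
    using lipschitz_extend_closure by blast
  then obtain G where G: "\<And>t. t \<in> {0..1} \<Longrightarrow> K-lipschitz_on (closure D) (G t) \<and> (\<forall>x\<in>D. G t x = \<Phi>\<^sub>0 t x)"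
    by metis
  show ?thesis
  proof
    fix t
    have "continuous_on (closure D) (G (clamp01 t))"
      using G[OF clamp01_in] by (auto intro: lipschitz_on_continuous_on)
    then show "(\<lambda>x. indicator (closure D) x *\<^sub>R G (clamp01 t) x) \<in> borel_measurable borel"
      by (intro borel_measurable_continuous_on_indicator) auto
  next
    fix \<theta> and t :: real assume \<theta>: "\<theta> \<in> S" and t: "t \<in> {0..1}"
    then have "\<theta> 0 \<in> D"
      by (simp add: D_def)
    then have "\<theta> 0 \<in> closure D"
      using closure_subset by blast
    then have "indicator (closure D) (\<theta> 0) = (1 :: real)"
      by simp
    moreover have "G t (\<theta> 0) = \<Phi>\<^sub>0 t (\<theta> 0)"
      using G[OF t] \<open>\<theta> 0 \<in> D\<close> by blast
    ultimately show "indicator (closure D) (\<theta> 0) *\<^sub>R G (clamp01 t) (\<theta> 0) = \<theta> t"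
      using \<Phi>\<^sub>0[OF \<theta> t] by (simp add: clamp01_id[OF t])
  qed
qed

lemma measurable_ode_flow:
  fixes f :: "real \<Rightarrow> 'a::euclidean_space \<Rightarrow> 'a"
  assumes f: "(\<lambda>(t, x). f t x) \<in> borel_measurable borel" and C: "\<forall>t\<in>{0..1}. \<forall>x. norm (f t x) \<le> C"
    and L: "\<forall>t\<in>{0..1}. L-lipschitz_on UNIV (f t)"
  obtains \<Phi> where "\<And>t. \<Phi> t \<in> borel_measurable borel"
    and "\<And>\<theta> t. \<theta> \<in> Cpaths \<Longrightarrow> \<forall>t\<in>{0..1}. \<theta> t = \<theta> 0 + (\<integral>s\<in>{0..t}. f s (\<theta> s) \<partial>lborel) \<Longrightarrow>
      t \<in> {0..1} \<Longrightarrow> \<Phi> t (\<theta> 0) = \<theta> t"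
proof -
  let ?S = "{\<theta> \<in> Cpaths. \<forall>t\<in>{0..1}. \<theta> t = \<theta> 0 + (\<integral>s\<in>{0..t}. f s (\<theta> s) \<partial>lborel)}"
  have "dist (\<theta> t) (\<theta>' t) \<le> exp L * dist (\<theta> 0) (\<theta>' 0)" if "\<theta> \<in> ?S" "\<theta>' \<in> ?S" "t \<in> {0..1}" for \<theta> \<theta>' t
    using that by (intro ode_solutions_dist_le[OF f C L]) blast+
  then show ?thesis
  proof (rule measurable_flow_of_lipschitz_initial[OF exp_ge_zero])
    fix \<Phi> assume \<Phi>: "\<And>t. \<Phi> t \<in> borel_measurable borel"
      "\<And>\<theta> t. \<theta> \<in> ?S \<Longrightarrow> t \<in> {0..1} \<Longrightarrow> \<Phi> t (\<theta> 0) = \<theta> t"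
    show thesis
      by (rule that[OF \<Phi>(1)], rule \<Phi>(2)) blast+
  qed
qed

lemma AE_parallel_transport_flow:
  fixes \<Psi> :: "(real \<Rightarrow> 'a::euclidean_space \<times> 'a) measure"
  assumes pt: "parallel_transport \<mu> \<psi> \<eta> \<Psi>"
    and flow: "AE \<theta> in \<eta>. \<forall>t\<in>{0..1}. \<theta> t = \<Phi> t (\<theta> 0)"
  shows "AE w in \<Psi>. \<forall>t\<in>{0..1}. w t = (\<Phi> t (fst (w 0)), snd (w 0))"
proof -
  have p1: "p1 \<in> \<Psi> \<rightarrow>\<^sub>M Cborel"
    using measurable_p1 measurable_cong_sets[OF parallel_transport_sets(1)[OF pt] refl] by blast
  have "distr \<Psi> Cborel p1 = \<eta>"
    using pt by (simp add: parallel_transport_def)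
  then have "AE \<theta> in distr \<Psi> Cborel p1. \<forall>t\<in>{0..1}. \<theta> t = \<Phi> t (\<theta> 0)"
    using flow by (simp only:)
  then have "AE w in \<Psi>. \<forall>t\<in>{0..1}. p1 w t = \<Phi> t (p1 w 0)"
    by (rule AE_distrD[OF p1])
  with AE_parallel_transport_snd_const[OF pt] show ?thesis
  proof eventually_elim
    case (elim w)
    show ?case
    proof
      fix t :: real assume "t \<in> {0..1}"
      then have "fst (w t) = \<Phi> t (fst (w 0))"
        using bspec[OF elim(2)] by (simp only: p1_def)
      moreover have "snd (w t) = snd (w 0)"
        using elim(1) by blast
      ultimately show "w t = (\<Phi> t (fst (w 0)), snd (w 0))"
        by (metis prod.collapse)
    qed
  qed
qed

lemma parallel_transport_unique_of_flow:
  fixes \<Psi>\<^sub>1 \<Psi>\<^sub>2 :: "(real \<Rightarrow> 'a::euclidean_space \<times> 'a) measure"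
  assumes pt: "parallel_transport \<mu> \<psi> \<eta> \<Psi>\<^sub>1" "parallel_transport \<mu> \<psi> \<eta> \<Psi>\<^sub>2"
    and \<Phi>: "\<And>t. \<Phi> t \<in> borel_measurable borel"
    and flow: "AE \<theta> in \<eta>. \<forall>t\<in>{0..1}. \<theta> t = \<Phi> t (\<theta> 0)"
  shows "\<Psi>\<^sub>1 = \<Psi>\<^sub>2"
proof (rule measure_eqI_Cborel_initial_law)
  show "(\<lambda>p :: 'a \<times> 'a. (\<Phi> t (fst p), snd p)) \<in> borel_measurable borel" for t
  proof -
    have fst: "(\<lambda>p :: 'a \<times> 'a. fst p) \<in> borel_measurable borel"
      and snd: "(\<lambda>p :: 'a \<times> 'a. snd p) \<in> borel_measurable borel"
      by (intro borel_measurable_continuous_onI continuous_intros)+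
    show ?thesis
      by (rule borel_measurable_Pair[OF measurable_compose[OF fst \<Phi>] snd])
  qed
  show "AE w in \<Psi>\<^sub>1. \<forall>t\<in>{0..1}. w t = (\<Phi> t (fst (w 0)), snd (w 0))"
    by (rule AE_parallel_transport_flow[OF pt(1) flow])
  show "AE w in \<Psi>\<^sub>2. \<forall>t\<in>{0..1}. w t = (\<Phi> t (fst (w 0)), snd (w 0))"
    by (rule AE_parallel_transport_flow[OF pt(2) flow])
  show "finite_measure \<Psi>\<^sub>1"
    using parallel_transport_sets(3)[OF pt(1)] by (rule prob_space.finite_measure)
  show "sets \<Psi>\<^sub>1 = sets Cborel" "sets \<Psi>\<^sub>2 = sets Cborel"
    using parallel_transport_sets(1) pt by blast+
  show "distr \<Psi>\<^sub>1 borel (ev 0) = distr \<Psi>\<^sub>2 borel (ev 0)"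
    using pt by (simp add: parallel_transport_def)
qed

lemma parallel_transport_unique_ode:
  fixes f :: "real \<Rightarrow> 'a::euclidean_space \<Rightarrow> 'a"
  assumes pt: "parallel_transport \<mu> \<psi> \<eta> \<Psi>\<^sub>1" "parallel_transport \<mu> \<psi> \<eta> \<Psi>\<^sub>2"
    and \<eta>: "is_path_prob \<eta>"
    and f: "(\<lambda>(t, x). f t x) \<in> borel_measurable borel" "\<forall>t\<in>{0..1}. \<forall>x. norm (f t x) \<le> C"
      "\<forall>t\<in>{0..1}. L-lipschitz_on UNIV (f t)"
    and ode: "AE \<theta> in \<eta>. \<forall>t\<in>{0..1}. \<theta> t = \<theta> 0 + (\<integral>s\<in>{0..t}. f s (\<theta> s) \<partial>lborel)"
  shows "\<Psi>\<^sub>1 = \<Psi>\<^sub>2"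
proof (rule measurable_ode_flow[OF f])
  fix \<Phi> assume \<Phi>: "\<And>t. \<Phi> t \<in> borel_measurable borel"
    and flow: "\<And>\<theta> t. \<theta> \<in> Cpaths \<Longrightarrow> \<forall>t\<in>{0..1}. \<theta> t = \<theta> 0 + (\<integral>s\<in>{0..t}. f s (\<theta> s) \<partial>lborel) \<Longrightarrow>
      t \<in> {0..1} \<Longrightarrow> \<Phi> t (\<theta> 0) = \<theta> t"
  from ode AE_space[of \<eta>] have "AE \<theta> in \<eta>. \<forall>t\<in>{0..1}. \<theta> t = \<Phi> t (\<theta> 0)"
  proof eventually_elim
    case (elim \<theta>)
    have "\<theta> \<in> Cpaths"
      using elim(2) \<eta> by (simp add: is_path_prob_def)
    then show ?case
      using flow[OF _ elim(1)] by metis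
  qed
  then show "\<Psi>\<^sub>1 = \<Psi>\<^sub>2"
    by (rule parallel_transport_unique_of_flow[OF pt \<Phi>])
qed

theorem mainTheorem4:
  fixes \<mu> :: "'a::euclidean_space measure"
    and \<psi> :: "'a \<Rightarrow> 'a measure"
    and \<eta> :: "(real \<Rightarrow> 'a) measure"
  assumes "P2 \<mu>"
    and "\<psi> \<in> Tmu \<mu>"
    and "is_path_prob \<eta>"
    and "distr \<eta> borel (ev 0) = \<mu>"
    and "(\<exists>v :: 'a \<Rightarrow> 'a. v \<in> borel_measurable borel \<and>
             (\<integral>\<^sup>+ x. ennreal ((norm (v x))\<^sup>2) \<partial>\<mu>) < \<infinity> \<and>
             (\<forall>x. \<psi> x = return borel (v x)))
       \<or> (\<exists>(f :: real \<Rightarrow> 'a \<Rightarrow> 'a) C L.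
             (\<lambda>(t, x). f t x) \<in> borel_measurable borel \<and>
             (\<forall>t\<in>{0..1}. \<forall>x. norm (f t x) \<le> C) \<and>
             (\<forall>t\<in>{0..1}. L-lipschitz_on UNIV (f t)) \<and>
             (AE \<theta> in \<eta>. \<forall>t\<in>{0..1}.
                \<theta> t = \<theta> 0 + (\<integral>s\<in>{0..t}. f s (\<theta> s) \<partial>lborel)))"
  shows "\<exists>!\<Psi>. parallel_transport \<mu> \<psi> \<eta> \<Psi>"
proof -
  have \<psi>: "\<psi> \<in> borel \<rightarrow>\<^sub>M prob_algebra borel"
    using assms(2) by (simp add: Tmu_def)
  have \<mu>: "sets \<mu> = sets borel"
    using assms(4) by auto
  have "parallel_transport \<mu> \<psi> \<eta> (constant_transport \<psi> \<eta>)"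
    using parallel_transport_constant_transport[OF \<psi> assms(3)] assms(4) by simp
  moreover have "\<Psi>\<^sub>1 = \<Psi>\<^sub>2" if pt: "parallel_transport \<mu> \<psi> \<eta> \<Psi>\<^sub>1" "parallel_transport \<mu> \<psi> \<eta> \<Psi>\<^sub>2"
    for \<Psi>\<^sub>1 \<Psi>\<^sub>2
    using assms(5)
  proof (elim disjE exE conjE)
    fix v :: "'a \<Rightarrow> 'a"
    assume "v \<in> borel_measurable borel" "\<forall>x. \<psi> x = return borel (v x)"
    from this(1) this(2)[rule_format] \<mu> show "\<Psi>\<^sub>1 = \<Psi>\<^sub>2"
      by (simp only: parallel_transport_return_eq[OF pt(1)] parallel_transport_return_eq[OF pt(2)])
  next
    fix f :: "real \<Rightarrow> 'a \<Rightarrow> 'a" and C L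
    assume "(\<lambda>(t, x). f t x) \<in> borel_measurable borel" "\<forall>t\<in>{0..1}. \<forall>x. norm (f t x) \<le> C"
      "\<forall>t\<in>{0..1}. L-lipschitz_on UNIV (f t)"
      "AE \<theta> in \<eta>. \<forall>t\<in>{0..1}. \<theta> t = \<theta> 0 + (\<integral>s\<in>{0..t}. f s (\<theta> s) \<partial>lborel)"
    then show "\<Psi>\<^sub>1 = \<Psi>\<^sub>2"
      by (rule parallel_transport_unique_ode[OF pt assms(3)])
  qed
  ultimately show ?thesis
    by blast
qed

end
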